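(* Consider the Markov switching model family of order $M$ and length $T$ built from the nonlinear Gaussian families $\mathcal{I}_{\mathcal{A}}^M$ (initial) and $\mathcal{G}_{\mathcal{B}}^M$ (transition) described in the context. Assume: (m1) Unique indexing: for all $b \neq b' \in \mathcal{B}$ there exists a set $\mathcal{Z}\subset\mathbb{R}^{mM}$ of nonzero Lebesgue measure such that for all $(\bm{z}_{t-1},\dots,\bm{z}_{t-M})\in\mathcal{Z}$, $\bm{m}(\bm{z}_{t-1},\dots,\bm{z}_{t-M},b)\neq \bm{m}(\bm{z}_{t-1},\dots,\bm{z}_{t-M},b')$ or $\bm{\Sigma}(\bm{z}_{t-1},\dots,\bm{z}_{t-M},b)\neq \bm{\Sigma}(\bm{z}_{t-1},\dots,\bm{z}_{t-M},b')$; and for all $a,a'\in\mathcal{A}$, $a\neq a' \Leftrightarrow \bm{\mu}(a)\neq\bm{\mu}(a')$ or $\bm{\Sigma}_1(a)\neq\bm{\Sigma}_1(a')$; (m2) for every $b\in\mathcal{B}$, the mean $\bm{m}(\cdot,b):\mathbb{R}^{mM}\to\mathbb{R}^m$ and covariance $\bm{\Sigma}(\cdot,b):\mathbb{R}^{mM}\to\mathbb{R}^{m\times m}$ are analytic functions. Then this MSM family is identifiable up to permutations in the sense stated in the context.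
   Context: Let $m,M,T$ be positive integers with $M<T$, and $\bm{z}_1,\dots,\bm{z}_T\in\mathbb{R}^m$. The initial family is $\mathcal{I}_{\mathcal{A}}^M=\{p_a(\bm{z}_{1:M})=\mathcal{N}(\bm{z}_{1:M}\mid\bm{\mu}(a),\bm{\Sigma}_1(a)) : a\in\mathcal{A}\}$ with $\bm{\Sigma}_1(a)\succ 0$. The transition family is $\mathcal{G}_{\mathcal{B}}^M=\{p_b(\bm{z}_t\mid\bm{z}_{t-1},\dots,\bm{z}_{t-M})=\mathcal{N}(\bm{z}_t\mid \bm{m}(\bm{z}_{t-1},\dots,\bm{z}_{t-M},b),\bm{\Sigma}(\bm{z}_{t-1},\dots,\bm{z}_{t-M},b)) : b\in\mathcal{B}\}$ with $\bm{\Sigma}(\cdot,b)\succ 0$, where the mean and covariance may be nonlinear in the lagged variables. The MSM family consists of all densities $p(\bm{z}_{1:T})=\sum_{i=1}^{C} c_i\, p_{a^i}(\bm{z}_{1:M})\prod_{t=M+1}^T p_{b^i_t}(\bm{z}_t\mid\bm{z}_{t-1},\dots,\bm{z}_{t-M})$, with $c_i>0$, $\sum_i c_i=1$, $C=K_0K^{T-M}$ for finite $K_0,K$ (number of initial and transition regimes), $a^i\in\mathcal{A}_0\subset\mathcal{A}$ with $|\mathcal{A}_0|=K_0$, $b^i_t\in\mathcal{B}_0\subset\mathcal{B}$ with $|\mathcal{B}_0|=K$, and the tuples $(a^i,b^i_{M+1},\dots,b^i_T)$ pairwise distinct (each $i$ corresponds to one path of discrete regimes $s_{M:T}\in[K_0]\times[K]^{T-M}$,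 with $c_i$ its probability). The family is identifiable up to permutations if for any two members $p$ (with $C,K_0,K,c_i,a^i,b^i_t$) and $\tilde p$ (with $\tilde C,\tilde K_0,\tilde K,\tilde c_j,\tilde a^j,\tilde b^j_t$) satisfying $p(\bm{z}_{1:T})=\tilde p(\bm{z}_{1:T})$ for all $\bm{z}_{1:T}\in\mathbb{R}^{mT}$, we have $C=\tilde C$, $K_0=\tilde K_0$, $K=\tilde K$, and for each $i$ there is some $j$ with: (1) $c_i=\tilde c_j$; (2) if $b^i_{t_1}=b^i_{t_2}$ for $M<t_1,t_2\le T$, $t_1\neq t_2$, then $\tilde b^j_{t_1}=\tilde b^j_{t_2}$; (3) $p_{a^i}(\bm{z}_{1:M})=p_{\tilde a^j}(\bm{z}_{1:M})$ for all $\bm{z}_{1:M}$; (4) $p_{b^i_t}(\bm{z}_t\mid\bm{z}_{t-1},\dots,\bm{z}_{t-M})=p_{\tilde b^j_t}(\bm{z}_t\mid\bm{z}_{t-1},\dots,\bm{z}_{t-M})$ for all arguments and all $M<t\le T$. *)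

theory Defs
  imports "HOL-Analysis.Analysis"
begin

definition posdef :: "real^'i^'i \<Rightarrow> bool" where
  "posdef S \<longleftrightarrow> transpose S = S \<and> (\<forall>x. x \<noteq> 0 \<longrightarrow> x \<bullet> (S *v x) > 0)"

definition gauss :: "real^'i \<Rightarrow> real^'i^'i \<Rightarrow> real^'i \<Rightarrow> real" where
  "gauss mu S x =
     exp (- (1/2) * ((x - mu) \<bullet> (matrix_inv S *v (x - mu))))
     / sqrt ((2 * pi) ^ CARD('i) * det S)"

definition real_analytic :: "(real^'i \<Rightarrow> real) \<Rightarrow> bool" where
  "real_analytic f \<longleftrightarrow>
     (\<forall>x. \<exists>r>0. \<exists>c :: ('i \<Rightarrow> nat) \<Rightarrow> real.
        \<forall>y\<in>ball x r.
          ((\<lambda>\<alpha>. c \<alpha> * (\<Prod>i\<in>UNIV. (y $ i - x $ i) ^ (\<alpha> i))) has_sum f y) UNIV)"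

definition analytic_vec :: "(real^'i \<Rightarrow> real^'j) \<Rightarrow> bool" where
  "analytic_vec f \<longleftrightarrow> (\<forall>j. real_analytic (\<lambda>x. f x $ j))"

definition analytic_mat :: "(real^'i \<Rightarrow> real^'j^'k) \<Rightarrow> bool" where
  "analytic_mat f \<longleftrightarrow> (\<forall>j k. real_analytic (\<lambda>x. f x $ k $ j))"

text \<open>Time series z_1,...,z_T are represented as functions nat => real^'m (only the
  values at 1..T matter). The lag type 'l has CARD('l) = M elements and a fixed
  bijection lagidx : 'l -> {1..M}. A point of R^{mM} is a vector indexed by 'm x 'l.\<close>

definition init_vec :: "('l::finite \<Rightarrow> nat) \<Rightarrow> (nat \<Rightarrow> real^'m) \<Rightarrow> real^('m \<times> 'l)" where
  "init_vec lagidx z = (\<chi> p. z (lagidx (snd p)) $ fst p)"   \<comment> \<open>z_{1:M}\<close>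

definition lag_vec :: "('l::finite \<Rightarrow> nat) \<Rightarrow> (nat \<Rightarrow> real^'m) \<Rightarrow> nat \<Rightarrow> real^('m \<times> 'l)" where
  "lag_vec lagidx z t = (\<chi> p. z (t - lagidx (snd p)) $ fst p)"   \<comment> \<open>(z_{t-1},...,z_{t-M})\<close>

definition msm_density ::
  "('a \<Rightarrow> real^('m::finite \<times> 'l::finite)) \<Rightarrow> ('a \<Rightarrow> real^('m \<times> 'l)^('m \<times> 'l))
   \<Rightarrow> (real^('m \<times> 'l) \<Rightarrow> 'b \<Rightarrow> real^'m) \<Rightarrow> (real^('m \<times> 'l) \<Rightarrow> 'b \<Rightarrow> real^'m^'m)
   \<Rightarrow> ('l \<Rightarrow> nat) \<Rightarrow> nat \<Rightarrow> nat
   \<Rightarrow> nat \<Rightarrow> (nat \<Rightarrow> real) \<Rightarrow> (nat \<Rightarrow> 'a) \<Rightarrow> (nat \<Rightarrow> nat \<Rightarrow> 'b)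
   \<Rightarrow> (nat \<Rightarrow> real^'m) \<Rightarrow> real" where
  "msm_density mu S1 mf Sf lagidx M T C c a b z =
     (\<Sum>i\<in>{1..C}. c i * gauss (mu (a i)) (S1 (a i)) (init_vec lagidx z)
        * (\<Prod>t\<in>{M+1..T}. gauss (mf (lag_vec lagidx z t) (b i t))
                                  (Sf (lag_vec lagidx z t) (b i t)) (z t)))"

definition msm_member ::
  "nat \<Rightarrow> nat \<Rightarrow> nat \<Rightarrow> nat \<Rightarrow> nat \<Rightarrow> (nat \<Rightarrow> real) \<Rightarrow> (nat \<Rightarrow> 'a) \<Rightarrow> (nat \<Rightarrow> nat \<Rightarrow> 'b) \<Rightarrow> bool"
  where
  "msm_member M T C K0 K c a b \<longleftrightarrow>
     C = K0 * K ^ (T - M) \<and>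
     (\<forall>i\<in>{1..C}. c i > 0) \<and> (\<Sum>i\<in>{1..C}. c i) = 1 \<and>
     (\<exists>A0 :: 'a set. \<exists>B0 :: 'b set. finite A0 \<and> card A0 = K0 \<and> finite B0 \<and> card B0 = K \<and>
        (\<forall>i\<in>{1..C}. a i \<in> A0 \<and> (\<forall>t\<in>{M+1..T}. b i t \<in> B0))) \<and>
     (\<forall>i\<in>{1..C}. \<forall>i'\<in>{1..C}. i \<noteq> i' \<longrightarrow>
        a i \<noteq> a i' \<or> (\<exists>t\<in>{M+1..T}. b i t \<noteq> b i' t))"

end

(* The MSM density is a finite mixture, over paths of regimes, of path densities: products of
   Gaussian densities.  The heart of the proof is that path densities of distinct regime paths are
   linearly independent, which is shown by induction on the length n of the series.  Gaussian
   densities with distinct parameters are linearly independent on every nonempty open set (on a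
   generic line they become exp (a s^2 + b s) with distinct (a, b), and the lexicographically
   largest exponent dominates).  By analyticity of the transition parameters and the identity
   theorem, z_1, ..., z_n can be confined to a product of open sets on which the finitely many
   transition regimes in use have pairwise distinct parameters at the lag vector feeding step
   n + 1; as a function of z_(n+1) the mixture then separates the paths by their regime at time
   n + 1, and the induction hypothesis applies to each group.  Consequently every regime path
   carries the same weight in two equal mixtures, and C, K0 and K are read off from the product
   structure of the set of regime paths. *)

theory Submission
  imports Defs "HOL-Complex_Analysis.Complex_Analysis" "HOL-Computational_Algebra.Polynomial"
    "HOL-Real_Asymp.Real_Asymp"
begin

no_notation fps_nth (infixl "$" 75)

section \<open>Positive definite matrices and their inverses\<close>

lemma matrix_inv_right:
  fixes S :: "'a::field^'n^'n"
  assumes "invertible S" shows "S ** matrix_inv S = mat 1"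
  using someI_ex[OF assms[unfolded invertible_def]] unfolding matrix_inv_def by blast

lemma matrix_inv_unique:
  fixes S :: "'a::field^'n^'n"
  assumes "S ** B = mat 1" shows "matrix_inv S = B"
proof -
  have "invertible S" using assms invertible_right_inverse by blast
  have "matrix_inv S = matrix_inv S ** (S ** B)" using assms by simp
  also have "\<dots> = (matrix_inv S ** S) ** B" by (simp add: matrix_mul_assoc)
  also have "matrix_inv S ** S = mat 1"
    using matrix_inv_right[OF \<open>invertible S\<close>] matrix_left_right_inverse by blast
  finally show ?thesis by simp
qed

lemma matrix_inv_matrix_inv:
  fixes S :: "'a::field^'n^'n"
  assumes "invertible S" shows "matrix_inv (matrix_inv S) = S"
  using matrix_inv_right[OF assms] matrix_left_right_inverse matrix_inv_unique by blast

lemma posdef_invertible: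
  fixes S :: "real^'n^'n"
  assumes "posdef S" shows "invertible S"
proof -
  have "S *v x = 0 \<Longrightarrow> x = 0" for x
    using assms unfolding posdef_def by (metis inner_zero_right less_irrefl)
  then show ?thesis by (metis invertible_left_inverse matrix_left_invertible_ker)
qed

lemma transpose_matrix_inv_posdef:
  fixes S :: "real^'n^'n"
  assumes "posdef S" shows "transpose (matrix_inv S) = matrix_inv S"
proof -
  have "transpose (matrix_inv S) ** S = transpose (S ** matrix_inv S)"
    using assms by (simp add: matrix_transpose_mul posdef_def)
  also have "\<dots> = mat 1"
    by (simp add: matrix_inv_right posdef_invertible[OF assms] transpose_mat)
  finally show ?thesis
    using matrix_inv_unique matrix_left_right_inverse by metis
qed

lemma inner_symmetric_matrix_commute:
  fixes E :: "real^'n^'n"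
  assumes "transpose E = E" shows "v \<bullet> (E *v u) = u \<bullet> (E *v v)"
  by (metis assms dot_lmul_matrix inner_commute vector_transpose_matrix)

lemma symmetric_quadratic_form_zero:
  fixes E :: "real^'n^'n"
  assumes "transpose E = E" and "\<And>v. v \<bullet> (E *v v) = 0" shows "E = 0"
proof -
  have "E *v v = 0" for v
  proof -
    let ?u = "E *v v"
    have "(?u + v) \<bullet> (E *v (?u + v)) = ?u \<bullet> (E *v ?u) + ?u \<bullet> (E *v v) + v \<bullet> (E *v ?u) + v \<bullet> (E *v v)"
      by (simp add: matrix_vector_right_distrib inner_add_left inner_add_right)
    then have "?u \<bullet> ?u = 0"
      using assms inner_symmetric_matrix_commute[OF assms(1), of v ?u] by simp
    then show ?thesis by simp
  qed
  then show ?thesis by (simp add: matrix_eq)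
qed

section \<open>Linear independence of Gaussian densities\<close>

lemma exp_quadratic_tendsto_0:
  fixes a b :: real
  assumes "a < 0 \<or> (a = 0 \<and> b < 0)"
  shows "((\<lambda>s. exp (a * s^2 + b * s)) \<longlongrightarrow> 0) at_top"
  using assms
proof
  assume "a < 0" then show ?thesis by real_asymp
next
  assume "a = 0 \<and> b < 0" then show ?thesis by real_asymp
qed

lemma complex_of_real_islimpt_interval:
  assumes "e > 0"
  shows "complex_of_real x islimpt complex_of_real ` ball x e"
proof (rule islimpt_approachable[THEN iffD2], intro allI impI)
  fix d :: real assume "d > 0"
  define t where "t = x + min e d / 2"
  have "t \<in> ball x e" "t \<noteq> x" "dist t x < d"
    using \<open>e > 0\<close> \<open>d > 0\<close> unfolding t_def by (auto simp: dist_real_def)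
  then show "\<exists>w\<in>complex_of_real ` ball x e. w \<noteq> of_real x \<and> dist w (of_real x) < d"
    by (intro bexI[of _ "of_real t"]) (auto simp flip: of_real_diff simp: dist_norm)
qed

lemma finite_lex_max:
  fixes P :: "('a::linorder \<times> 'b::linorder) set"
  assumes "finite P" "P \<noteq> {}"
  obtains a b where "(a, b) \<in> P" "\<And>x y. (x, y) \<in> P \<Longrightarrow> x < a \<or> (x = a \<and> y \<le> b)"
proof -
  define a where "a = Max (fst ` P)"
  define b where "b = Max (snd ` {p\<in>P. fst p = a})"
  have "a \<in> fst ` P" unfolding a_def using assms by simp
  then have "b \<in> snd ` {p\<in>P. fst p = a}" unfolding b_def using assms(1) by (intro Max_in) auto
  then have "(a, b) \<in> P" by force
  moreover have "x < a \<or> (x = a \<and> y \<le> b)" if "(x, y) \<in> P" for x y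
  proof -
    have "x \<in> fst ` P" using that by force
    then have "x \<le> a" unfolding a_def using assms(1) by simp
    moreover have "y \<le> b" if "x = a"
    proof -
      have "y \<in> snd ` {p\<in>P. fst p = a}" using \<open>(x, y) \<in> P\<close> that by force
      then show ?thesis unfolding b_def using assms(1) by simp
    qed
    ultimately show ?thesis by auto
  qed
  ultimately show ?thesis using that by blast
qed

text \<open>The term with the lexicographically largest exponent dominates as \<open>s \<rightarrow> \<infinity>\<close>.\<close>

lemma exp_quadratic_independent_UNIV:
  fixes \<phi> :: "'q \<Rightarrow> real \<times> real"
  assumes fin: "finite Q" and inj: "inj_on \<phi> Q"
    and zero: "\<And>s. (\<Sum>q\<in>Q. D q * exp (fst (\<phi> q) * s^2 + snd (\<phi> q) * s)) = 0"
  shows "\<forall>q\<in>Q. D q = 0"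
proof (rule ccontr)
  assume "\<not> (\<forall>q\<in>Q. D q = 0)"
  define Q' where "Q' = {q\<in>Q. D q \<noteq> 0}"
  have "Q' \<noteq> {}" "finite Q'" "Q' \<subseteq> Q"
    using \<open>\<not> (\<forall>q\<in>Q. D q = 0)\<close> fin unfolding Q'_def by auto
  then obtain a b where "(a, b) \<in> \<phi> ` Q'" and max: "\<And>x y. (x, y) \<in> \<phi> ` Q' \<Longrightarrow> x < a \<or> (x = a \<and> y \<le> b)"
    using finite_lex_max[of "\<phi> ` Q'"] by blast
  then obtain q0 where q0: "q0 \<in> Q'" "\<phi> q0 = (a, b)" by auto
  have lex: "fst (\<phi> q) - a < 0 \<or> (fst (\<phi> q) - a = 0 \<and> snd (\<phi> q) - b < 0)" if "q \<in> Q'" "q \<noteq> q0" for q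
  proof -
    have "\<phi> q \<noteq> (a, b)" using inj q0 that \<open>Q' \<subseteq> Q\<close> by (metis inj_on_eq_iff subsetD)
    then show ?thesis using max[of "fst (\<phi> q)" "snd (\<phi> q)"] that by force
  qed
  define g where "g s = (\<Sum>q\<in>Q'. D q * exp ((fst (\<phi> q) - a) * s^2 + (snd (\<phi> q) - b) * s))" for s
  have "(\<Sum>q\<in>Q. D q * exp (fst (\<phi> q) * s^2 + snd (\<phi> q) * s))
      = (\<Sum>q\<in>Q'. D q * exp (fst (\<phi> q) * s^2 + snd (\<phi> q) * s))" for s
    unfolding Q'_def by (rule sum.mono_neutral_right[OF fin]) auto
  moreover have "g s = exp (- (a * s^2 + b * s)) * (\<Sum>q\<in>Q'. D q * exp (fst (\<phi> q) * s^2 + snd (\<phi> q) * s))"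
    for s
    unfolding g_def sum_distrib_left
    by (rule sum.cong) (simp_all add: mult.left_commute flip: exp_add, simp add: algebra_simps)
  ultimately have "g = (\<lambda>_. 0)" using zero by auto
  have "(g \<longlongrightarrow> (\<Sum>q\<in>Q'. D q * (if q = q0 then 1 else 0))) at_top"
    unfolding g_def
  proof (intro tendsto_sum tendsto_mult_left)
    fix q assume "q \<in> Q'"
    show "((\<lambda>s. exp ((fst (\<phi> q) - a) * s^2 + (snd (\<phi> q) - b) * s)) \<longlongrightarrow> (if q = q0 then 1 else 0)) at_top"
      using q0 exp_quadratic_tendsto_0 lex[OF \<open>q \<in> Q'\<close>] by auto
  qed
  also have "(\<Sum>q\<in>Q'. D q * (if q = q0 then 1 else 0)) = D q0"
    using q0 \<open>finite Q'\<close> by (simp add: if_distrib sum.delta' cong: if_cong)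
  finally have "D q0 = 0"
    using \<open>g = (\<lambda>_. 0)\<close> by (metis tendsto_const_iff trivial_limit_at_top_linorder)
  then show False using q0 unfolding Q'_def by simp
qed

lemma exp_quadratic_independent:
  fixes \<phi> :: "'q \<Rightarrow> real \<times> real"
  assumes fin: "finite Q" and inj: "inj_on \<phi> Q" and "\<delta> > 0"
    and zero: "\<And>s. \<bar>s\<bar> < \<delta> \<Longrightarrow> (\<Sum>q\<in>Q. D q * exp (fst (\<phi> q) * s^2 + snd (\<phi> q) * s)) = 0"
  shows "\<forall>q\<in>Q. D q = 0"
proof (rule exp_quadratic_independent_UNIV[OF fin inj])
  fix s :: real
  define f where "f w = (\<Sum>q\<in>Q. of_real (D q) * exp (of_real (fst (\<phi> q)) * w^2 + of_real (snd (\<phi> q)) * w))"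
    for w :: complex
  have f_real: "f (of_real t) = of_real (\<Sum>q\<in>Q. D q * exp (fst (\<phi> q) * t^2 + snd (\<phi> q) * t))" for t
    unfolding f_def by (simp add: exp_of_real[symmetric])
  define U where "U = complex_of_real ` ball 0 \<delta>"
  have "0 islimpt U" unfolding U_def using complex_of_real_islimpt_interval[OF \<open>\<delta> > 0\<close>, of 0] by simp
  moreover have "f w = 0" if w: "w \<in> U" for w
  proof -
    obtain t where "w = of_real t" "\<bar>t\<bar> < \<delta>" using w unfolding U_def by auto
    then show ?thesis using zero f_real by (metis of_real_0)
  qed
  moreover have "f holomorphic_on UNIV" unfolding f_def by (intro holomorphic_intros)
  ultimately have "f (of_real s) = 0"
    using analytic_continuation[OF _ open_UNIV connected_UNIV subset_UNIV] by blast
  then have "complex_of_real (\<Sum>q\<in>Q. D q * exp (fst (\<phi> q) * s^2 + snd (\<phi> q) * s)) = 0"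
    by (simp only: f_real)
  then show "(\<Sum>q\<in>Q. D q * exp (fst (\<phi> q) * s^2 + snd (\<phi> q) * s)) = 0"
    by (simp only: of_real_eq_0_iff)
qed

lemma add_scaleR_in_ball:
  fixes x v :: "'a::real_normed_vector"
  assumes "\<bar>s\<bar> < e / (norm v + 1)"
  shows "x + s *\<^sub>R v \<in> ball x e"
proof -
  have "norm (s *\<^sub>R v) \<le> \<bar>s\<bar> * (norm v + 1)" by (simp add: mult_left_mono)
  also have "\<dots> < e" using assms pos_less_divide_eq[of "norm v + 1"] by (simp add: add_nonneg_pos)
  finally show ?thesis by (simp add: dist_norm)
qed

definition polynomial_on_lines :: "(real^'n \<Rightarrow> real) \<Rightarrow> bool" where
  "polynomial_on_lines F \<longleftrightarrow> (\<forall>v w. \<exists>p. \<forall>t. F (v + t *\<^sub>R w) = poly p t)"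

lemma polynomial_on_lines_diff:
  assumes "polynomial_on_lines F" "polynomial_on_lines G"
  shows "polynomial_on_lines (\<lambda>v. F v - G v)"
  using assms unfolding polynomial_on_lines_def by (metis poly_diff)

lemma polynomial_on_lines_add:
  assumes "polynomial_on_lines F" "polynomial_on_lines G"
  shows "polynomial_on_lines (\<lambda>v. F v + G v)"
  using assms unfolding polynomial_on_lines_def by (metis poly_add)

lemma polynomial_on_lines_power2:
  assumes "polynomial_on_lines F"
  shows "polynomial_on_lines (\<lambda>v. (F v)^2)"
  using assms unfolding polynomial_on_lines_def by (metis poly_power)

lemma polynomial_on_lines_cmult:
  assumes "polynomial_on_lines F"
  shows "polynomial_on_lines (\<lambda>v. c * F v)"
  using assms unfolding polynomial_on_lines_def by (metis poly_smult)

lemma polynomial_on_lines_uminus: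
  assumes "polynomial_on_lines F"
  shows "polynomial_on_lines (\<lambda>v. - F v)"
  using polynomial_on_lines_cmult[OF assms, of "-1"] by simp

lemma polynomial_on_lines_quadratic_form:
  fixes E :: "real^'n^'n"
  shows "polynomial_on_lines (\<lambda>v. v \<bullet> (E *v v))"
  unfolding polynomial_on_lines_def
proof (intro allI)
  fix v w :: "real^'n"
  show "\<exists>p. \<forall>t. (v + t *\<^sub>R w) \<bullet> (E *v (v + t *\<^sub>R w)) = poly p t"
    by (rule exI[of _ "[:v \<bullet> (E *v v), v \<bullet> (E *v w) + w \<bullet> (E *v v), w \<bullet> (E *v w):]"])
       (simp add: matrix_vector_right_distrib matrix_vector_mult_scaleR inner_add_left
         inner_add_right algebra_simps power2_eq_square)
qed

lemma polynomial_on_lines_linear_form: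
  fixes u :: "real^'n"
  shows "polynomial_on_lines (\<lambda>v. v \<bullet> u)"
  unfolding polynomial_on_lines_def
proof (intro allI)
  fix v w :: "real^'n"
  show "\<exists>p. \<forall>t. (v + t *\<^sub>R w) \<bullet> u = poly p t"
    by (rule exI[of _ "[:v \<bullet> u, w \<bullet> u:]"]) (simp add: inner_add_left algebra_simps)
qed

text \<open>A finite family of nonzero functions that are polynomial on every line has a common
  non-root: on the line through a common non-root of all but one member and a non-root of the
  last one, each member is a nonzero polynomial, so all but finitely many points will do.\<close>

lemma polynomial_on_lines_common_nonzero:
  fixes F :: "'k \<Rightarrow> real^'n \<Rightarrow> real"
  assumes "finite K" and "\<And>k. k \<in> K \<Longrightarrow> polynomial_on_lines (F k)"
    and "\<And>k. k \<in> K \<Longrightarrow> \<exists>v. F k v \<noteq> 0"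
  shows "\<exists>v. \<forall>k\<in>K. F k v \<noteq> 0"
  using assms
proof (induction K rule: finite_induct)
  case empty then show ?case by simp
next
  case (insert k K)
  obtain v0 where v0: "\<forall>j\<in>K. F j v0 \<noteq> 0" using insert by blast
  obtain w where w: "F k w \<noteq> 0" using insert.prems by blast
  have "\<exists>p. \<forall>t. F j (v0 + t *\<^sub>R (w - v0)) = poly p t" if "j \<in> insert k K" for j
    using insert.prems(1)[OF that] unfolding polynomial_on_lines_def by blast
  then obtain p where p: "\<And>j t. j \<in> insert k K \<Longrightarrow> F j (v0 + t *\<^sub>R (w - v0)) = poly (p j) t"
    by metis
  have "p j \<noteq> 0" if "j \<in> insert k K" for j
    using p[OF that, of 0] p[OF that, of 1] that v0 w by auto
  then have "finite (\<Union>j\<in>insert k K. {t. poly (p j) t = 0})"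
    using insert.hyps(1) by (auto intro: poly_roots_finite)
  then obtain t where "t \<notin> (\<Union>j\<in>insert k K. {t. poly (p j) t = 0})"
    using ex_new_if_finite[OF infinite_UNIV_char_0] by blast
  then show ?case using p by (intro exI[of _ "v0 + t *\<^sub>R (w - v0)"]) auto
qed

definition gauss_exponent_coeffs :: "real^'n \<Rightarrow> real^'n^'n \<Rightarrow> real^'n \<Rightarrow> real^'n \<Rightarrow> real \<times> real"
  where "gauss_exponent_coeffs mu S y0 v =
    (- (1/2) * (v \<bullet> (matrix_inv S *v v)), - (v \<bullet> (matrix_inv S *v (y0 - mu))))"

lemma gauss_along_line:
  fixes mu y0 v :: "real^'n" and S :: "real^'n^'n"
  assumes "posdef S"
  shows "gauss mu S (y0 + s *\<^sub>R v) = gauss mu S y0 *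
    exp (fst (gauss_exponent_coeffs mu S y0 v) * s^2 + snd (gauss_exponent_coeffs mu S y0 v) * s)"
proof -
  define A where "A = matrix_inv S"
  define w where "w = y0 - mu"
  have "transpose A = A" unfolding A_def using transpose_matrix_inv_posdef[OF assms] .
  then have "(w + s *\<^sub>R v) \<bullet> (A *v (w + s *\<^sub>R v)) = w \<bullet> (A *v w) + 2 * s * (v \<bullet> (A *v w)) + s^2 * (v \<bullet> (A *v v))"
    using inner_symmetric_matrix_commute[of A w v]
    by (simp add: matrix_vector_right_distrib matrix_vector_mult_scaleR inner_add_left
        inner_add_right algebra_simps power2_eq_square)
  then have "- (1/2) * ((w + s *\<^sub>R v) \<bullet> (A *v (w + s *\<^sub>R v))) = - (1/2) * (w \<bullet> (A *v w))
      + (fst (gauss_exponent_coeffs mu S y0 v) * s^2 + snd (gauss_exponent_coeffs mu S y0 v) * s)"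
    unfolding gauss_exponent_coeffs_def A_def[symmetric] w_def[symmetric] by (simp add: algebra_simps)
  moreover have "y0 + s *\<^sub>R v - mu = w + s *\<^sub>R v" unfolding w_def by simp
  ultimately have "exp (- (1/2) * ((y0 + s *\<^sub>R v - mu) \<bullet> (A *v (y0 + s *\<^sub>R v - mu)))) =
      exp (- (1/2) * (w \<bullet> (A *v w))) *
      exp (fst (gauss_exponent_coeffs mu S y0 v) * s^2 + snd (gauss_exponent_coeffs mu S y0 v) * s)"
    by (simp only: exp_add)
  then show ?thesis unfolding gauss_def A_def[symmetric] w_def[symmetric] by simp
qed

lemma gauss_nonzero:
  fixes S :: "real^'n^'n"
  assumes "posdef S" shows "gauss mu S y \<noteq> 0"
  using posdef_invertible[OF assms] by (simp add: gauss_def invertible_det_nz)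

lemma gauss_exponent_coeffs_separate:
  fixes mu mu' y0 :: "real^'n" and S S' :: "real^'n^'n"
  assumes pd: "posdef S" "posdef S'" and ne: "(mu, S) \<noteq> (mu', S')"
  shows "\<exists>v. gauss_exponent_coeffs mu S y0 v \<noteq> gauss_exponent_coeffs mu' S' y0 v"
proof (rule ccontr)
  define A A' where "A = matrix_inv S" and "A' = matrix_inv S'"
  assume "\<not> ?thesis"
  then have same: "v \<bullet> ((A - A') *v v) = 0" "v \<bullet> (A *v (y0 - mu) - A' *v (y0 - mu')) = 0" for v
    unfolding gauss_exponent_coeffs_def A_def A'_def
    by (auto simp: matrix_vector_mult_diff_rdistrib inner_diff_right)
  have "transpose (A - A') = A - A'"
    using transpose_matrix_inv_posdef[OF pd(1)] transpose_matrix_inv_posdef[OF pd(2)]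
    unfolding A_def A'_def by (simp add: transpose_def vec_eq_iff)
  then have "A = A'" using symmetric_quadratic_form_zero same(1) by fastforce
  then have "S = S'"
    using matrix_inv_matrix_inv posdef_invertible pd unfolding A_def A'_def by metis
  have "A *v (mu' - mu) = 0"
    using same(2)[of "A *v (y0 - mu) - A' *v (y0 - mu')"] \<open>A = A'\<close>
    by (simp add: matrix_vector_mult_diff_distrib)
  then have "S *v (A *v (mu' - mu)) = 0" by simp
  then have "mu = mu'"
    using matrix_inv_right[OF posdef_invertible[OF pd(1)]] unfolding A_def
    by (simp add: matrix_vector_mul_assoc)
  with \<open>S = S'\<close> ne show False by simp
qed

lemma gauss_separating_direction:
  fixes Q :: "((real^'n) \<times> (real^'n^'n)) set"
  assumes "finite Q" and "\<forall>q\<in>Q. posdef (snd q)"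
  shows "\<exists>v. inj_on (\<lambda>q. gauss_exponent_coeffs (fst q) (snd q) y0 v) Q"
proof -
  define \<gamma> where "\<gamma> q = gauss_exponent_coeffs (fst q) (snd q) y0" for q
  define K where "K = {(q, q'). q \<in> Q \<and> q' \<in> Q \<and> q \<noteq> q'}"
  define F where "F k v = (fst (\<gamma> (fst k) v) - fst (\<gamma> (snd k) v))^2 + (snd (\<gamma> (fst k) v) - snd (\<gamma> (snd k) v))^2"
    for k v
  have F_zero_iff: "F k v = 0 \<longleftrightarrow> \<gamma> (fst k) v = \<gamma> (snd k) v" for k v
    unfolding F_def by (simp add: prod_eq_iff sum_power2_eq_zero_iff)
  have "K \<subseteq> Q \<times> Q" unfolding K_def by auto
  then have "finite K" using \<open>finite Q\<close> finite_subset by blast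
  moreover have "polynomial_on_lines (F k)" for k
    unfolding F_def \<gamma>_def gauss_exponent_coeffs_def fst_conv snd_conv
    by (intro polynomial_on_lines_add polynomial_on_lines_power2 polynomial_on_lines_diff
        polynomial_on_lines_cmult polynomial_on_lines_uminus polynomial_on_lines_quadratic_form polynomial_on_lines_linear_form)
  moreover have "\<exists>v. F k v \<noteq> 0" if "k \<in> K" for k
  proof -
    obtain mu S mu' S' where k: "k = ((mu, S), (mu', S'))" "(mu, S) \<in> Q" "(mu', S') \<in> Q"
      "(mu, S) \<noteq> (mu', S')"
      using \<open>k \<in> K\<close> unfolding K_def by auto
    moreover have "posdef S" "posdef S'" using assms(2) k(2,3) by auto
    ultimately obtain v where "\<gamma> (mu, S) v \<noteq> \<gamma> (mu', S') v"
      using gauss_exponent_coeffs_separate[of S S' mu mu' y0] unfolding \<gamma>_def by auto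
    then show ?thesis using k(1) F_zero_iff by (metis fst_conv snd_conv)
  qed
  ultimately obtain v where "\<forall>k\<in>K. F k v \<noteq> 0"
    using polynomial_on_lines_common_nonzero[of K F] by blast
  then have "inj_on (\<lambda>q. \<gamma> q v) Q"
    unfolding F_zero_iff by (intro inj_onI) (auto simp: K_def)
  then show ?thesis unfolding \<gamma>_def by blast
qed

text \<open>Restricting to a line through \<open>y0\<close> in a separating direction reduces the claim
  to the independence of the functions \<open>exp (a s\<^sup>2 + b s)\<close>.\<close>

lemma gauss_linear_independent:
  fixes Q :: "((real^'n) \<times> (real^'n^'n)) set"
  assumes fin: "finite Q" and pd: "\<forall>q\<in>Q. posdef (snd q)" and "open W" "y0 \<in> W"
    and zero: "\<forall>y\<in>W. (\<Sum>q\<in>Q. E q * gauss (fst q) (snd q) y) = 0"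
  shows "\<forall>q\<in>Q. E q = 0"
proof -
  define \<gamma> where "\<gamma> q = gauss_exponent_coeffs (fst q) (snd q) y0" for q
  obtain v where inj: "inj_on (\<lambda>q. \<gamma> q v) Q"
    using gauss_separating_direction[OF fin pd] unfolding \<gamma>_def by blast
  obtain e where "e > 0" "ball y0 e \<subseteq> W" using \<open>open W\<close> \<open>y0 \<in> W\<close> open_contains_ball by blast
  have "\<forall>q\<in>Q. E q * gauss (fst q) (snd q) y0 = 0"
  proof (rule exp_quadratic_independent[OF fin inj])
    show "e / (norm v + 1) > 0" using \<open>e > 0\<close> by (simp add: add_nonneg_pos)
    fix s :: real assume "\<bar>s\<bar> < e / (norm v + 1)"
    then have "y0 + s *\<^sub>R v \<in> W" using add_scaleR_in_ball \<open>ball y0 e \<subseteq> W\<close> by blast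
    then have "(\<Sum>q\<in>Q. E q * gauss (fst q) (snd q) (y0 + s *\<^sub>R v)) = 0" using zero by blast
    moreover have "gauss (fst q) (snd q) (y0 + s *\<^sub>R v) =
        gauss (fst q) (snd q) y0 * exp (fst (\<gamma> q v) * s^2 + snd (\<gamma> q v) * s)" if "q \<in> Q" for q
      unfolding \<gamma>_def using gauss_along_line pd that by blast
    ultimately show "(\<Sum>q\<in>Q. E q * gauss (fst q) (snd q) y0 * exp (fst (\<gamma> q v) * s^2 + snd (\<gamma> q v) * s)) = 0"
      by (simp add: mult.assoc)
  qed
  then show ?thesis using pd gauss_nonzero by (metis mult_eq_0_iff)
qed

lemma gauss_linear_independent_grouped:
  fixes p :: "'k \<Rightarrow> (real^'n) \<times> (real^'n^'n)"
  assumes fin: "finite I" and pd: "\<forall>i\<in>I. posdef (snd (p i))" and "open W" "y0 \<in> W"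
    and zero: "\<forall>y\<in>W. (\<Sum>i\<in>I. e i * gauss (fst (p i)) (snd (p i)) y) = 0"
  shows "\<forall>i\<in>I. (\<Sum>j\<in>{j\<in>I. p j = p i}. e j) = 0"
proof -
  define E where "E q = (\<Sum>j\<in>{j\<in>I. p j = q}. e j)" for q
  have "(\<Sum>i\<in>I. e i * gauss (fst (p i)) (snd (p i)) y) = (\<Sum>q\<in>p ` I. E q * gauss (fst q) (snd q) y)" for y
    unfolding E_def sum_distrib_right by (rule sum.image_gen[OF fin, THEN trans]) (auto intro!: sum.cong)
  then have "\<forall>q\<in>p ` I. E q = 0"
    using gauss_linear_independent[of "p ` I" W y0 E] fin pd zero assms(3,4) by simp
  then show ?thesis unfolding E_def by blast
qed

section \<open>Real analytic functions\<close>

definition locally_power_series :: "(real \<Rightarrow> real) \<Rightarrow> bool" where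
  "locally_power_series \<psi> \<longleftrightarrow>
     (\<forall>s. \<exists>\<rho>>0. \<exists>a. \<forall>\<sigma>. \<bar>\<sigma>\<bar> < \<rho> \<longrightarrow> ((\<lambda>k. a k * \<sigma>^k) has_sum \<psi> (s + \<sigma>)) UNIV)"

text \<open>A real power series extends to a holomorphic function on the complex disc of the same
  radius, to which the complex identity theorem applies.\<close>

lemma power_series_vanishing_near_point:
  fixes a :: "nat \<Rightarrow> real" and g :: "real \<Rightarrow> real"
  assumes "\<rho> > 0"
    and hs: "\<And>\<sigma>. \<bar>\<sigma>\<bar> < \<rho> \<Longrightarrow> ((\<lambda>k. a k * \<sigma>^k) has_sum g \<sigma>) UNIV"
    and "\<bar>\<sigma>1\<bar> < \<rho>" and "e1 > 0" and zero: "\<And>\<sigma>. \<bar>\<sigma> - \<sigma>1\<bar> < e1 \<Longrightarrow> g \<sigma> = 0"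
    and "\<bar>\<sigma>\<bar> < \<rho>"
  shows "g \<sigma> = 0"
proof -
  define G where "G w = (\<Sum>n. complex_of_real (a n) * w^n)" for w :: complex
  have sums: "(\<lambda>n. complex_of_real (a n) * (w - 0)^n) sums G w" if "w \<in> ball 0 \<rho>" for w
  proof -
    have "((\<lambda>k. a k * (norm w)^k) has_sum g (norm w)) UNIV" using hs that by simp
    then have "(\<lambda>k. norm (a k * (norm w)^k)) summable_on UNIV"
      by (metis has_sum_imp_summable summable_on_iff_abs_summable_on_real)
    then have "summable (\<lambda>k. norm (a k * (norm w)^k))"
      by (rule summable_on_UNIV_nonneg_real_iff[THEN iffD1, rotated]) simp
    then have "summable (\<lambda>n. complex_of_real (a n) * w^n)"
      by (rule summable_norm_cancel[OF summable_comparison_test[rotated]])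
         (auto simp: norm_mult norm_power)
    then show ?thesis unfolding G_def by (simp add: summable_sums)
  qed
  have G_real: "G (of_real \<tau>) = of_real (g \<tau>)" if "\<bar>\<tau>\<bar> < \<rho>" for \<tau>
  proof -
    have "(\<lambda>k. complex_of_real (a k * \<tau>^k)) sums of_real (g \<tau>)"
      by (simp only: sums_of_real_iff) (rule has_sum_imp_sums[OF hs[OF that]])
    moreover have "(\<lambda>k. complex_of_real (a k * \<tau>^k)) sums G (of_real \<tau>)" using sums[of "of_real \<tau>"] that by simp
    ultimately show ?thesis using sums_unique2 by blast
  qed
  define e where "e = min e1 (\<rho> - \<bar>\<sigma>1\<bar>)"
  have "e > 0" unfolding e_def using assms by simp
  have U: "complex_of_real ` ball \<sigma>1 e \<subseteq> ball 0 \<rho>"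
    unfolding e_def by (auto simp: dist_real_def)
  have "G w = 0" if "w \<in> complex_of_real ` ball \<sigma>1 e" for w
    using that zero G_real unfolding e_def by (auto simp: dist_real_def)
  then have "G (of_real \<sigma>) = 0"
    using analytic_continuation[OF power_series_holomorphic[OF sums] open_ball
        convex_connected[OF convex_ball] U _ complex_of_real_islimpt_interval[OF \<open>e > 0\<close>]]
      assms by auto
  then show ?thesis using G_real[OF \<open>\<bar>\<sigma>\<bar> < \<rho>\<close>] by simp
qed

text \<open>The points near which \<open>\<psi>\<close> vanishes identically form an open set, which is also closed by
  the previous lemma; by connectedness it is everything.\<close>

lemma locally_power_series_zero:
  assumes \<psi>: "locally_power_series \<psi>" and "e > 0" and zero: "\<And>s. \<bar>s\<bar> < e \<Longrightarrow> \<psi> s = 0"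
  shows "\<psi> t = 0"
proof -
  define N where "N = interior {s. \<psi> s = 0}"
  have "0 \<in> N" unfolding N_def mem_interior
    using zero \<open>e > 0\<close> by (auto simp: dist_real_def)
  have "closed N" unfolding closed_limpt
  proof (intro allI impI)
    fix s assume "s islimpt N"
    obtain \<rho> a where "\<rho> > 0" and hs: "\<And>\<sigma>. \<bar>\<sigma>\<bar> < \<rho> \<Longrightarrow> ((\<lambda>k. a k * \<sigma>^k) has_sum \<psi> (s + \<sigma>)) UNIV"
      using \<psi> unfolding locally_power_series_def by blast
    obtain s1 where "s1 \<in> N" "dist s1 s < \<rho>" using \<open>s islimpt N\<close> \<open>\<rho> > 0\<close> islimpt_approachable by blast
    then obtain e1 where "e1 > 0" "ball s1 e1 \<subseteq> {s. \<psi> s = 0}"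
      unfolding N_def by (meson mem_interior)
    then have "\<psi> (s + \<sigma>) = 0" if "\<bar>\<sigma>\<bar> < \<rho>" for \<sigma>
      using power_series_vanishing_near_point[OF \<open>\<rho> > 0\<close> hs, of "s1 - s" e1 \<sigma>] that \<open>dist s1 s < \<rho>\<close>
      by (fastforce simp: dist_real_def subset_iff)
    then have "ball s \<rho> \<subseteq> {s. \<psi> s = 0}"
      by (auto simp: dist_real_def) (metis abs_minus_commute add_diff_cancel_left' diff_add_cancel)
    then show "s \<in> N" unfolding N_def mem_interior using \<open>\<rho> > 0\<close> by blast
  qed
  then have "N = UNIV" using clopen[of N] \<open>0 \<in> N\<close> unfolding N_def by auto
  then show ?thesis unfolding N_def using interior_subset by blast
qed

lemma finite_multi_indices_of_degree: "finite {\<alpha> :: 'i::finite \<Rightarrow> nat. sum \<alpha> UNIV = k}"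
proof (rule finite_subset)
  show "{\<alpha> :: 'i \<Rightarrow> nat. sum \<alpha> UNIV = k} \<subseteq> Pi\<^sub>E UNIV (\<lambda>_. {..k})"
  proof
    fix \<alpha> :: "'i \<Rightarrow> nat" assume "\<alpha> \<in> {\<alpha>. sum \<alpha> UNIV = k}"
    then have "\<alpha> i \<le> k" for i using member_le_sum[of i UNIV \<alpha>] by simp
    then show "\<alpha> \<in> Pi\<^sub>E UNIV (\<lambda>_. {..k})" by (simp add: PiE_UNIV_domain)
  qed
qed (auto intro: finite_PiE)

text \<open>Grouping the monomials of the expansion at \<open>p\<close> by total degree yields a power series in
  \<open>\<sigma>\<close> for \<open>f (p + \<sigma> u)\<close>.\<close>

lemma real_analytic_on_line:
  fixes f :: "real^'i \<Rightarrow> real"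
  assumes "real_analytic f"
  shows "\<exists>\<rho>>0. \<exists>a. \<forall>\<sigma>. \<bar>\<sigma>\<bar> < \<rho> \<longrightarrow> ((\<lambda>k. a k * \<sigma>^k) has_sum f (p + \<sigma> *\<^sub>R u)) UNIV"
proof -
  obtain r c where "r > 0" and
    hs: "\<forall>y\<in>ball p r. ((\<lambda>\<alpha>. c \<alpha> * (\<Prod>i\<in>UNIV. (y $ i - p $ i) ^ (\<alpha> i))) has_sum f y) UNIV"
    using assms unfolding real_analytic_def by blast
  define U where "U \<alpha> = (\<Prod>i\<in>UNIV. (u $ i) ^ (\<alpha> i))" for \<alpha> :: "'i \<Rightarrow> nat"
  define Ak where "Ak k = {\<alpha> :: 'i \<Rightarrow> nat. sum \<alpha> UNIV = k}" for k
  define a where "a k = (\<Sum>\<alpha>\<in>Ak k. c \<alpha> * U \<alpha>)" for k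
  have "((\<lambda>k. a k * \<sigma>^k) has_sum f (p + \<sigma> *\<^sub>R u)) UNIV" if "\<bar>\<sigma>\<bar> < r / (norm u + 1)" for \<sigma>
  proof -
    define h where "h \<alpha> = c \<alpha> * U \<alpha> * \<sigma> ^ sum \<alpha> UNIV" for \<alpha>
    have "p + \<sigma> *\<^sub>R u \<in> ball p r" using add_scaleR_in_ball[OF that] .
    then have "((\<lambda>\<alpha>. c \<alpha> * (\<Prod>i\<in>UNIV. ((p + \<sigma> *\<^sub>R u) $ i - p $ i) ^ (\<alpha> i))) has_sum f (p + \<sigma> *\<^sub>R u)) UNIV"
      using hs by blast
    moreover have "(\<lambda>\<alpha>. c \<alpha> * (\<Prod>i\<in>UNIV. ((p + \<sigma> *\<^sub>R u) $ i - p $ i) ^ (\<alpha> i))) = h"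
      unfolding U_def h_def by (simp add: power_mult_distrib prod.distrib power_sum mult_ac)
    ultimately have "(h has_sum f (p + \<sigma> *\<^sub>R u)) UNIV" by simp
    moreover have "bij_betw (\<lambda>\<alpha>. (sum \<alpha> UNIV, \<alpha>)) UNIV (Sigma UNIV Ak)"
      unfolding Ak_def by (rule bij_betwI[where g = snd]) auto
    ultimately have "((\<lambda>x. h (snd x)) has_sum f (p + \<sigma> *\<^sub>R u)) (Sigma UNIV Ak)"
      using has_sum_reindex_bij_betw by fastforce
    then show ?thesis
    proof (rule has_sum_Sigma')
      fix k :: nat
      have "(\<Sum>\<alpha>\<in>Ak k. h \<alpha>) = a k * \<sigma>^k"
        unfolding a_def sum_distrib_right h_def by (rule sum.cong) (auto simp: Ak_def)
      moreover have "finite (Ak k)" unfolding Ak_def by (rule finite_multi_indices_of_degree)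
      ultimately show "((\<lambda>\<alpha>. h (snd (k, \<alpha>))) has_sum a k * \<sigma>^k) (Ak k)"
        using has_sum_finite[of "Ak k" h] by simp
    qed
  qed
  moreover have "r / (norm u + 1) > 0" using \<open>r > 0\<close> by (simp add: add_nonneg_pos)
  ultimately show ?thesis by blast
qed

lemma real_analytic_locally_power_series_on_line:
  fixes f :: "real^'i \<Rightarrow> real"
  assumes "real_analytic f"
  shows "locally_power_series (\<lambda>s. f (x0 + s *\<^sub>R u))"
  unfolding locally_power_series_def
proof
  fix s
  have "x0 + (s + \<sigma>) *\<^sub>R u = (x0 + s *\<^sub>R u) + \<sigma> *\<^sub>R u" for \<sigma>
    by (simp add: scaleR_add_left)
  then show "\<exists>\<rho>>0. \<exists>a. \<forall>\<sigma>. \<bar>\<sigma>\<bar> < \<rho> \<longrightarrow> ((\<lambda>k. a k * \<sigma>^k) has_sum f (x0 + (s + \<sigma>) *\<^sub>R u)) UNIV"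
    using real_analytic_on_line[OF assms, of "x0 + s *\<^sub>R u" u] by presburger
qed

lemma real_analytic_identity:
  fixes f :: "real^'i \<Rightarrow> real"
  assumes "real_analytic f" and "open V" "x0 \<in> V" and zero: "\<forall>x\<in>V. f x = 0"
  shows "f y = 0"
proof -
  obtain e where "e > 0" "ball x0 e \<subseteq> V" using \<open>open V\<close> \<open>x0 \<in> V\<close> open_contains_ball by blast
  have "f (x0 + s *\<^sub>R (y - x0)) = 0" if "\<bar>s\<bar> < e / (norm (y - x0) + 1)" for s
    using add_scaleR_in_ball[OF that] \<open>ball x0 e \<subseteq> V\<close> zero by blast
  moreover have "e / (norm (y - x0) + 1) > 0" using \<open>e > 0\<close> by (simp add: add_nonneg_pos)
  ultimately have "f (x0 + 1 *\<^sub>R (y - x0)) = 0"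
    using locally_power_series_zero[OF real_analytic_locally_power_series_on_line[OF assms(1)]]
    by blast
  then show ?thesis by simp
qed

lemma has_sum_diff:
  fixes f g :: "'a \<Rightarrow> 'b::{topological_ab_group_add, topological_semigroup_mult, ring_1}"
  assumes "(f has_sum a) A" "(g has_sum b) A"
  shows "((\<lambda>x. f x - g x) has_sum (a - b)) A"
  using has_sum_add[OF assms(1) has_sum_uminusI[OF assms(2)]] by simp

lemma monomial_increment_bound:
  fixes x y :: "real^'i"
  assumes "norm (y - x) < \<rho>"
  shows "\<bar>c * (\<Prod>i\<in>UNIV. (y $ i - x $ i) ^ (\<alpha> i)) - c * (\<Prod>i\<in>UNIV. (x $ i - x $ i) ^ (\<alpha> i))\<bar>
    \<le> norm (y - x) / \<rho> * \<bar>c * \<rho> ^ sum \<alpha> UNIV\<bar>"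
proof -
  have "\<rho> > 0" using assms le_less_trans norm_ge_zero by blast
  show ?thesis
  proof (cases "\<alpha> = (\<lambda>_. 0)")
    case True
    then show ?thesis using \<open>\<rho> > 0\<close> by simp
  next
    case False
    define d where "d = norm (y - x)"
    from False obtain j where "\<alpha> j \<noteq> 0" by auto
    then have x0: "(\<Prod>i\<in>UNIV. (x $ i - x $ i) ^ (\<alpha> i)) = 0" and "sum \<alpha> UNIV \<ge> 1"
      using member_le_sum[of j UNIV \<alpha>] by (auto intro: prod_zero[of UNIV])
    have "\<bar>y $ i - x $ i\<bar> ^ (\<alpha> i) \<le> d ^ (\<alpha> i)" for i
      unfolding d_def using component_le_norm_cart[of "y - x" i] by (intro power_mono) auto
    then have "\<bar>c * (\<Prod>i\<in>UNIV. (y $ i - x $ i) ^ (\<alpha> i))\<bar> \<le> \<bar>c\<bar> * d ^ sum \<alpha> UNIV"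
      by (auto simp: abs_mult abs_prod power_abs power_sum intro!: mult_left_mono prod_mono)
    also have "\<dots> \<le> \<bar>c\<bar> * ((d / \<rho>) * \<rho> ^ sum \<alpha> UNIV)"
    proof (rule mult_left_mono)
      have "d ^ sum \<alpha> UNIV = (d / \<rho>) ^ sum \<alpha> UNIV * \<rho> ^ sum \<alpha> UNIV"
        using \<open>\<rho> > 0\<close> by (simp add: power_divide)
      also have "(d / \<rho>) ^ sum \<alpha> UNIV \<le> d / \<rho>"
        using power_decreasing[of 1 "sum \<alpha> UNIV" "d / \<rho>"] \<open>sum \<alpha> UNIV \<ge> 1\<close> assms \<open>\<rho> > 0\<close>
        unfolding d_def by simp
      finally show "d ^ sum \<alpha> UNIV \<le> (d / \<rho>) * \<rho> ^ sum \<alpha> UNIV"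
        using \<open>\<rho> > 0\<close> by (simp add: mult_right_mono)
    qed simp
    also have "\<dots> = d / \<rho> * \<bar>c * \<rho> ^ sum \<alpha> UNIV\<bar>"
      using \<open>\<rho> > 0\<close> by (simp add: abs_mult)
    finally show ?thesis unfolding x0 d_def by simp
  qed
qed

text \<open>The expansion at \<open>x\<close> converges absolutely at \<open>x + (\<rho>, \<dots>, \<rho>)\<close>, so
  \<open>B = (\<Sum>\<alpha>. \<bar>c \<alpha>\<bar> * \<rho> ^ \<bar>\<alpha>\<bar>)\<close> is finite, and near \<open>x\<close> each monomial moves by at most
  \<open>norm (y - x) / \<rho>\<close> times its term in \<open>B\<close>.\<close>

lemma real_analytic_increment_bound:
  fixes f :: "real^'i \<Rightarrow> real"
  assumes "real_analytic f"
  obtains \<rho> B where "\<rho> > 0" "B \<ge> 0" "\<And>y. norm (y - x) < \<rho> \<Longrightarrow> \<bar>f y - f x\<bar> \<le> norm (y - x) / \<rho> * B"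
proof -
  obtain r c where "r > 0" and
    hs: "\<forall>y\<in>ball x r. ((\<lambda>\<alpha>. c \<alpha> * (\<Prod>i\<in>UNIV. (y $ i - x $ i) ^ (\<alpha> i))) has_sum f y) UNIV"
    using assms unfolding real_analytic_def by blast
  define \<rho> where "\<rho> = r / (real CARD('i) + 1)"
  have "\<rho> > 0" "\<rho> < r" unfolding \<rho>_def using \<open>r > 0\<close> by (simp_all add: divide_less_eq)
  define ys where "ys = x + (\<chi> i. \<rho>)"
  have "norm ((\<chi> i. \<rho>) :: real^'i) \<le> (\<Sum>i\<in>UNIV. \<bar>((\<chi> i. \<rho>) :: real^'i) $ i\<bar>)"
    by (rule norm_le_l1_cart)
  also have "\<dots> < r" unfolding \<rho>_def using \<open>r > 0\<close> by (simp add: field_simps)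
  finally have "ys \<in> ball x r" unfolding ys_def by (simp add: dist_norm)
  then have "((\<lambda>\<alpha>. c \<alpha> * (\<Prod>i\<in>UNIV. (ys $ i - x $ i) ^ (\<alpha> i))) has_sum f ys) UNIV"
    using hs by blast
  moreover have "(\<Prod>i\<in>UNIV. (ys $ i - x $ i) ^ (\<alpha> i)) = \<rho> ^ sum \<alpha> UNIV" for \<alpha>
    unfolding ys_def by (simp add: power_sum)
  ultimately have "((\<lambda>\<alpha>. c \<alpha> * \<rho> ^ sum \<alpha> UNIV) has_sum f ys) UNIV" by simp
  then obtain B where "((\<lambda>\<alpha>. norm (c \<alpha> * \<rho> ^ sum \<alpha> UNIV)) has_sum B) UNIV"
    by (metis has_sum_imp_summable has_sum_infsum summable_on_iff_abs_summable_on_real)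
  then have B: "((\<lambda>\<alpha>. \<bar>c \<alpha> * \<rho> ^ sum \<alpha> UNIV\<bar>) has_sum B) UNIV" by simp
  have "\<bar>f y - f x\<bar> \<le> norm (y - x) / \<rho> * B" if "norm (y - x) < \<rho>" for y
  proof -
    have "y \<in> ball x r" using that \<open>\<rho> < r\<close> by (simp add: dist_norm norm_minus_commute)
    moreover have "x \<in> ball x r" using \<open>r > 0\<close> by simp
    ultimately have "((\<lambda>\<alpha>. c \<alpha> * (\<Prod>i\<in>UNIV. (y $ i - x $ i) ^ (\<alpha> i))
        - c \<alpha> * (\<Prod>i\<in>UNIV. (x $ i - x $ i) ^ (\<alpha> i))) has_sum (f y - f x)) UNIV"
      using hs by (intro has_sum_diff) blast+
    moreover have "((\<lambda>\<alpha>. norm (y - x) / \<rho> * \<bar>c \<alpha> * \<rho> ^ sum \<alpha> UNIV\<bar>) has_sum (norm (y - x) / \<rho> * B)) UNIV"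
      by (rule has_sum_cmult_right[OF B])
    moreover have "norm (c \<alpha> * (\<Prod>i\<in>UNIV. (y $ i - x $ i) ^ (\<alpha> i))
        - c \<alpha> * (\<Prod>i\<in>UNIV. (x $ i - x $ i) ^ (\<alpha> i))) \<le> norm (y - x) / \<rho> * \<bar>c \<alpha> * \<rho> ^ sum \<alpha> UNIV\<bar>"
      for \<alpha> using monomial_increment_bound[OF that] by simp
    ultimately have "norm (f y - f x) \<le> norm (y - x) / \<rho> * B" by (rule norm_infsum_le)
    then show ?thesis by simp
  qed
  moreover have "B \<ge> 0" using has_sum_nonneg[OF B] by simp
  ultimately show ?thesis using that \<open>\<rho> > 0\<close> by blast
qed

lemma real_analytic_continuous:
  fixes f :: "real^'i \<Rightarrow> real"
  assumes "real_analytic f"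
  shows "isCont f x"
  unfolding continuous_at_eps_delta
proof (intro allI impI)
  fix \<epsilon> :: real assume "\<epsilon> > 0"
  obtain \<rho> B where "\<rho> > 0" "B \<ge> 0"
    and bound: "\<And>y. norm (y - x) < \<rho> \<Longrightarrow> \<bar>f y - f x\<bar> \<le> norm (y - x) / \<rho> * B"
    using real_analytic_increment_bound[OF assms] by blast
  define \<delta> where "\<delta> = min \<rho> (\<epsilon> * \<rho> / (B + 1))"
  have "\<delta> > 0" unfolding \<delta>_def using \<open>\<rho> > 0\<close> \<open>\<epsilon> > 0\<close> \<open>B \<ge> 0\<close> by simp
  moreover have "dist (f y) (f x) < \<epsilon>" if "dist y x < \<delta>" for y
  proof -
    have y: "norm (y - x) < \<rho>" "norm (y - x) < \<epsilon> * \<rho> / (B + 1)"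
      using that unfolding \<delta>_def by (auto simp: dist_norm)
    have "\<bar>f y - f x\<bar> \<le> norm (y - x) / \<rho> * B" using bound[OF y(1)] .
    also have "\<dots> \<le> norm (y - x) / \<rho> * (B + 1)" using \<open>\<rho> > 0\<close> by (intro mult_left_mono) auto
    also have "\<dots> < \<epsilon>" using y(2) \<open>\<rho> > 0\<close> \<open>B \<ge> 0\<close> by (simp add: field_simps)
    finally show ?thesis by (simp add: dist_real_def)
  qed
  ultimately show "\<exists>\<delta>>0. \<forall>y. dist y x < \<delta> \<longrightarrow> dist (f y) (f x) < \<epsilon>" by blast
qed

lemma real_analytic_diff:
  fixes f g :: "real^'i \<Rightarrow> real"
  assumes "real_analytic f" "real_analytic g"
  shows "real_analytic (\<lambda>x. f x - g x)"
  unfolding real_analytic_def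
proof
  fix x
  obtain r1 c1 where "r1 > 0"
    and f: "\<forall>y\<in>ball x r1. ((\<lambda>\<alpha>. c1 \<alpha> * (\<Prod>i\<in>UNIV. (y $ i - x $ i) ^ (\<alpha> i))) has_sum f y) UNIV"
    using assms(1) unfolding real_analytic_def by blast
  obtain r2 c2 where "r2 > 0"
    and g: "\<forall>y\<in>ball x r2. ((\<lambda>\<alpha>. c2 \<alpha> * (\<Prod>i\<in>UNIV. (y $ i - x $ i) ^ (\<alpha> i))) has_sum g y) UNIV"
    using assms(2) unfolding real_analytic_def by blast
  have "\<forall>y\<in>ball x (min r1 r2).
      ((\<lambda>\<alpha>. (c1 \<alpha> - c2 \<alpha>) * (\<Prod>i\<in>UNIV. (y $ i - x $ i) ^ (\<alpha> i))) has_sum (f y - g y)) UNIV"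
  proof
    fix y assume "y \<in> ball x (min r1 r2)"
    then show "((\<lambda>\<alpha>. (c1 \<alpha> - c2 \<alpha>) * (\<Prod>i\<in>UNIV. (y $ i - x $ i) ^ (\<alpha> i))) has_sum (f y - g y)) UNIV"
      using has_sum_diff[OF f[rule_format] g[rule_format]] by (simp add: left_diff_distrib)
  qed
  then show "\<exists>r>0. \<exists>c. \<forall>y\<in>ball x r. ((\<lambda>\<alpha>. c \<alpha> * (\<Prod>i\<in>UNIV. (y $ i - x $ i) ^ (\<alpha> i))) has_sum (f y - g y)) UNIV"
    using \<open>r1 > 0\<close> \<open>r2 > 0\<close> by (intro exI[of _ "min r1 r2"] conjI) auto
qed

text \<open>By the identity theorem a nonzero analytic function cannot vanish on a nonempty open set, and
  by continuity its non-vanishing set is open.\<close>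

lemma real_analytic_conditions_on_open_subset:
  fixes R :: "'k \<Rightarrow> real^'i \<Rightarrow> bool"
  assumes "finite P"
    and witness: "\<And>p. p \<in> P \<Longrightarrow>
      \<exists>g. real_analytic g \<and> (\<exists>x. g x \<noteq> 0) \<and> (\<forall>x. g x \<noteq> 0 \<longrightarrow> R p x)"
    and "open V" "V \<noteq> {}"
  shows "\<exists>V'. open V' \<and> V' \<noteq> {} \<and> V' \<subseteq> V \<and> (\<forall>x\<in>V'. \<forall>p\<in>P. R p x)"
  using assms
proof (induction P rule: finite_induct)
  case empty then show ?case by blast
next
  case (insert p P)
  have "\<exists>V1. open V1 \<and> V1 \<noteq> {} \<and> V1 \<subseteq> V \<and> (\<forall>x\<in>V1. \<forall>q\<in>P. R q x)"
    by (rule insert.IH) (use insert.prems in auto)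
  then obtain V1 where V1: "open V1" "V1 \<noteq> {}" "V1 \<subseteq> V" "\<forall>x\<in>V1. \<forall>q\<in>P. R q x"
    by blast
  obtain g where g: "real_analytic g" "\<exists>x. g x \<noteq> 0" "\<forall>x. g x \<noteq> 0 \<longrightarrow> R p x"
    using insert.prems(1) by blast
  obtain x1 where "x1 \<in> V1" "g x1 \<noteq> 0"
    using real_analytic_identity[OF g(1) V1(1)] V1(2) g(2) by blast
  moreover have "open {x. g x \<noteq> 0}"
    using real_analytic_continuous[OF g(1)] by (intro open_Collect_neq continuous_intros)
      (auto simp: continuous_on_eq_continuous_at)
  ultimately show ?case
    using V1 g(3) by (intro exI[of _ "V1 \<inter> {x. g x \<noteq> 0}"]) auto
qed

lemma analytic_params_inj_on_open_subset:
  fixes mf :: "real^'n \<Rightarrow> 'b \<Rightarrow> real^'m" and Sf :: "real^'n \<Rightarrow> 'b \<Rightarrow> real^'m^'m"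
  assumes an: "\<forall>\<beta>. analytic_vec (\<lambda>x. mf x \<beta>) \<and> analytic_mat (\<lambda>x. Sf x \<beta>)"
    and distinct: "\<And>\<beta> \<beta>'. \<beta> \<noteq> \<beta>' \<Longrightarrow> \<exists>x. (mf x \<beta>, Sf x \<beta>) \<noteq> (mf x \<beta>', Sf x \<beta>')"
    and "finite B0" "open V" "V \<noteq> {}"
  shows "\<exists>V'. open V' \<and> V' \<noteq> {} \<and> V' \<subseteq> V \<and> (\<forall>x\<in>V'. inj_on (\<lambda>\<beta>. (mf x \<beta>, Sf x \<beta>)) B0)"
proof -
  define P where "P = {(\<beta>, \<beta>'). \<beta> \<in> B0 \<and> \<beta>' \<in> B0 \<and> \<beta> \<noteq> \<beta>'}"
  define R where "R p x \<longleftrightarrow> (mf x (fst p), Sf x (fst p)) \<noteq> (mf x (snd p), Sf x (snd p))" for p x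
  have "P \<subseteq> B0 \<times> B0" unfolding P_def by auto
  then have "finite P" using \<open>finite B0\<close> finite_subset by blast
  moreover have "\<exists>g. real_analytic g \<and> (\<exists>x. g x \<noteq> 0) \<and> (\<forall>x. g x \<noteq> 0 \<longrightarrow> R p x)" if "p \<in> P" for p
  proof -
    have "fst p \<noteq> snd p" using \<open>p \<in> P\<close> unfolding P_def by auto
    then obtain x where "(mf x (fst p), Sf x (fst p)) \<noteq> (mf x (snd p), Sf x (snd p))"
      using distinct by blast
    then consider j where "mf x (fst p) $ j \<noteq> mf x (snd p) $ j"
      | k j where "Sf x (fst p) $ k $ j \<noteq> Sf x (snd p) $ k $ j"
      by (auto simp: vec_eq_iff)
    then show ?thesis
    proof cases
      case (1 j)
      then show ?thesis using an unfolding R_def analytic_vec_def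
        by (intro exI[of _ "\<lambda>x. mf x (fst p) $ j - mf x (snd p) $ j"]) (auto intro: real_analytic_diff)
    next
      case (2 k j)
      then show ?thesis using an unfolding R_def analytic_mat_def
        by (intro exI[of _ "\<lambda>x. Sf x (fst p) $ k $ j - Sf x (snd p) $ k $ j"]) (auto intro: real_analytic_diff)
    qed
  qed
  ultimately obtain V' where V': "open V'" "V' \<noteq> {}" "V' \<subseteq> V" "\<forall>x\<in>V'. \<forall>p\<in>P. R p x"
    using real_analytic_conditions_on_open_subset[of P R V] assms(4,5) by blast
  have "inj_on (\<lambda>\<beta>. (mf x \<beta>, Sf x \<beta>)) B0" if "x \<in> V'" for x
    using V'(4) that unfolding P_def R_def by (auto intro: inj_onI)
  with V'(1-3) show ?thesis by blast
qed

section \<open>Identifiability of the switching model\<close>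

definition lag_block :: "real^('m::finite \<times> 'l::finite) \<Rightarrow> 'l \<Rightarrow> real^'m" where
  "lag_block x l = (\<chi> j. x $ (j, l))"

lemma lag_block_lag_vec: "lag_block (lag_vec lagidx z t) l = z (t - lagidx l)"
  by (simp add: lag_block_def lag_vec_def vec_eq_iff)

lemma open_lag_box:
  assumes "\<And>l. open (U l)"
  shows "open {x :: real^('m::finite \<times> 'l::finite). \<forall>l. lag_block x l \<in> U l}"
proof -
  have "open ((\<lambda>x :: real^('m \<times> 'l). lag_block x l) -` U l)" for l
    unfolding lag_block_def by (intro open_vimage assms continuous_intros)
  moreover have "{x :: real^('m \<times> 'l). \<forall>l. lag_block x l \<in> U l} = (\<Inter>l. (\<lambda>x. lag_block x l) -` U l)"
    by auto
  ultimately show ?thesis by (simp add: open_INT)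
qed

lemma lag_box_nonempty:
  assumes "\<And>l. U l \<noteq> {}"
  shows "\<exists>x :: real^('m::finite \<times> 'l::finite). \<forall>l. lag_block x l \<in> U l"
proof -
  have "\<forall>l. \<exists>v. v \<in> U l" using assms by blast
  then obtain u where "\<forall>l. u l \<in> U l" by (rule choice[THEN exE])
  then show ?thesis
    by (intro exI[of _ "\<chi> p. u (snd p) $ fst p"]) (simp add: lag_block_def vec_eq_iff)
qed

lemma dist_lt_if_lag_blocks_close:
  fixes x x0 :: "real^('m::finite \<times> 'l::finite)"
  assumes close: "\<And>l. dist (lag_block x l) (lag_block x0 l) < e / CARD('m \<times> 'l)"
  shows "dist x x0 < e"
proof -
  have "\<bar>(x - x0) $ (j, l)\<bar> < e / CARD('m \<times> 'l)" for j l
    using component_le_norm_cart[of "lag_block x l - lag_block x0 l" j] close[of l]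
    by (simp add: lag_block_def dist_norm)
  then have "(\<Sum>p\<in>UNIV. \<bar>(x - x0) $ p\<bar>) < (\<Sum>p\<in>(UNIV :: ('m \<times> 'l) set). e / CARD('m \<times> 'l))"
    by (intro sum_strict_mono) auto
  then show ?thesis using norm_le_l1_cart[of "x - x0"] by (simp add: dist_norm)
qed

definition regime_path :: "nat \<Rightarrow> nat \<Rightarrow> ('i \<Rightarrow> 'a) \<Rightarrow> ('i \<Rightarrow> nat \<Rightarrow> 'b) \<Rightarrow> 'i \<Rightarrow> 'a \<times> (nat \<Rightarrow> 'b)"
  where "regime_path M T a b i = (a i, restrict (b i) {M+1..T})"

lemma regime_path_eq_iff:
  "regime_path M T a b i = regime_path M T a' b' j \<longleftrightarrow> a i = a' j \<and> (\<forall>t\<in>{M+1..T}. b i t = b' j t)"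
  by (auto simp: regime_path_def restrict_def fun_eq_iff)

locale msm_model =
  fixes mu :: "'a \<Rightarrow> real^('m::finite \<times> 'l::finite)"
    and S1 :: "'a \<Rightarrow> real^('m \<times> 'l)^('m \<times> 'l)"
    and mf :: "real^('m \<times> 'l) \<Rightarrow> 'b \<Rightarrow> real^'m"
    and Sf :: "real^('m \<times> 'l) \<Rightarrow> 'b \<Rightarrow> real^'m^'m"
    and lagidx :: "'l \<Rightarrow> nat" and M :: nat
  assumes lagidx_bij: "bij_betw lagidx UNIV {1..M}"
    and S1_posdef: "\<And>\<alpha>. posdef (S1 \<alpha>)"
    and Sf_posdef: "\<And>x \<beta>. posdef (Sf x \<beta>)"
    and init_params_inj: "inj (\<lambda>\<alpha>. (mu \<alpha>, S1 \<alpha>))"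
    and trans_params_analytic: "\<forall>\<beta>. analytic_vec (\<lambda>x. mf x \<beta>) \<and> analytic_mat (\<lambda>x. Sf x \<beta>)"
    and trans_params_distinct: "\<And>\<beta> \<beta>'. \<beta> \<noteq> \<beta>' \<Longrightarrow> \<exists>x. (mf x \<beta>, Sf x \<beta>) \<noteq> (mf x \<beta>', Sf x \<beta>')"
begin

lemma lagidx_inj: "inj lagidx"
  using lagidx_bij by (simp add: bij_betw_def)

lemma lagidx_bounds: "1 \<le> lagidx l" "lagidx l \<le> M"
  using lagidx_bij by (auto simp: bij_betw_def)

lemma lagidx_surj: "t \<in> {1..M} \<Longrightarrow> \<exists>l. lagidx l = t"
  using lagidx_bij unfolding bij_betw_def by (metis rangeE)

definition path_density :: "nat \<Rightarrow> 'a \<Rightarrow> (nat \<Rightarrow> 'b) \<Rightarrow> (nat \<Rightarrow> real^'m) \<Rightarrow> real" where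
  "path_density n \<alpha> \<beta> z = gauss (mu \<alpha>) (S1 \<alpha>) (init_vec lagidx z) *
     (\<Prod>t\<in>{M+1..n}. gauss (mf (lag_vec lagidx z t) (\<beta> t)) (Sf (lag_vec lagidx z t) (\<beta> t)) (z t))"

lemma msm_density_eq_sum_path_density:
  "msm_density mu S1 mf Sf lagidx M T C c a b z = (\<Sum>i\<in>{1..C}. c i * path_density T (a i) (b i) z)"
  by (simp add: msm_density_def path_density_def mult.assoc)

lemma path_density_M: "path_density M \<alpha> \<beta> z = gauss (mu \<alpha>) (S1 \<alpha>) (init_vec lagidx z)"
  by (simp add: path_density_def)

lemma path_density_cong:
  assumes "M \<le> n" and "\<And>t. t \<in> {1..n} \<Longrightarrow> z t = z' t"
  shows "path_density n \<alpha> \<beta> z = path_density n \<alpha> \<beta> z'"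
proof -
  have "z (lagidx l) = z' (lagidx l)" for l
    using assms lagidx_bounds[of l] by auto
  then have "init_vec lagidx z = init_vec lagidx z'" unfolding init_vec_def by simp
  moreover have "lag_vec lagidx z t = lag_vec lagidx z' t" if "t \<in> {M+1..n}" for t
  proof -
    have "t - lagidx l \<in> {1..n}" for l
      using that lagidx_bounds[of l] by auto
    then show ?thesis using assms(2) unfolding lag_vec_def by simp
  qed
  moreover have "z t = z' t" if "t \<in> {M+1..n}" for t
    using assms(2) that by simp
  ultimately show ?thesis
    unfolding path_density_def by (intro arg_cong2[where f = "(*)"] prod.cong refl) simp_all
qed

lemma path_density_Suc:
  assumes "M \<le> n"
  shows "path_density (Suc n) \<alpha> \<beta> z = path_density n \<alpha> \<beta> z *
    gauss (mf (lag_vec lagidx z (Suc n)) (\<beta> (Suc n))) (Sf (lag_vec lagidx z (Suc n)) (\<beta> (Suc n))) (z (Suc n))"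
  using assms by (simp add: path_density_def mult.assoc)

lemma path_density_Suc_fun_upd:
  assumes "M \<le> n"
  shows "path_density (Suc n) \<alpha> \<beta> (z(Suc n := y)) = path_density n \<alpha> \<beta> z *
    gauss (mf (lag_vec lagidx z (Suc n)) (\<beta> (Suc n))) (Sf (lag_vec lagidx z (Suc n)) (\<beta> (Suc n))) y"
proof -
  have "Suc n - lagidx l \<noteq> Suc n" for l
    using lagidx_bounds[of l] by arith
  then have "lag_vec lagidx (z(Suc n := y)) (Suc n) = lag_vec lagidx z (Suc n)"
    unfolding lag_vec_def by simp
  moreover have "path_density n \<alpha> \<beta> (z(Suc n := y)) = path_density n \<alpha> \<beta> z"
    using assms by (intro path_density_cong) auto
  ultimately show ?thesis
    using assms by (simp add: path_density_Suc)
qed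

lemma init_densities_grouped_independent:
  fixes I :: "'k set"
  assumes "finite I" and U: "\<And>t. open (U t)" "\<And>t. U t \<noteq> {}"
    and zero: "\<And>z. \<forall>t\<in>{1..M}. z t \<in> U t \<Longrightarrow>
      (\<Sum>j\<in>I. d j * gauss (mu (A j)) (S1 (A j)) (init_vec lagidx z)) = 0"
    and "i \<in> I"
  shows "(\<Sum>j\<in>{j\<in>I. A j = A i}. d j) = 0"
proof -
  define W where "W = {w. \<forall>l. lag_block w l \<in> U (lagidx l)}"
  define p where "p j = (mu (A j), S1 (A j))" for j
  have zero_W: "\<forall>w\<in>W. (\<Sum>j\<in>I. d j * gauss (fst (p j)) (snd (p j)) w) = 0"
  proof
    fix w assume "w \<in> W"
    define z where "z t = lag_block w (inv lagidx t)" for t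
    have "init_vec lagidx z = w"
      unfolding z_def init_vec_def lag_block_def by (simp add: vec_eq_iff inv_f_f[OF lagidx_inj])
    moreover have "z t \<in> U t" if "t \<in> {1..M}" for t
      using lagidx_surj[OF that] \<open>w \<in> W\<close> unfolding z_def W_def by (auto simp: inv_f_f[OF lagidx_inj])
    ultimately show "(\<Sum>j\<in>I. d j * gauss (fst (p j)) (snd (p j)) w) = 0"
      using zero unfolding p_def by fastforce
  qed
  have "open W" unfolding W_def using U(1) by (rule open_lag_box)
  moreover obtain w0 where "w0 \<in> W"
    using lag_box_nonempty[of "\<lambda>l. U (lagidx l)"] U(2) unfolding W_def by blast
  moreover have "\<forall>j\<in>I. posdef (snd (p j))" by (simp add: p_def S1_posdef)
  ultimately have "\<forall>i\<in>I. (\<Sum>j\<in>{j\<in>I. p j = p i}. d j) = 0"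
    using gauss_linear_independent_grouped[OF \<open>finite I\<close> _ _ _ zero_W] by blast
  then have "(\<Sum>j\<in>{j\<in>I. p j = p i}. d j) = 0" using \<open>i \<in> I\<close> by blast
  moreover have "p j = p i \<longleftrightarrow> A j = A i" for j
    using injD[OF init_params_inj, of "A j" "A i"] unfolding p_def by auto
  ultimately show ?thesis by simp
qed

lemma lag_box_shrink:
  fixes V :: "(real^('m \<times> 'l)) set"
  assumes "M \<le> n" and U: "\<And>t. open (U t)" "\<And>t. U t \<noteq> {}" and "open V" "x0 \<in> V"
    and x0: "\<And>l. lag_block x0 l \<in> U (Suc n - lagidx l)"
  obtains U' where "\<And>t. open (U' t)" "\<And>t. U' t \<noteq> {}" "\<And>t. U' t \<subseteq> U t"
    "\<And>z. \<forall>t\<in>{1..n}. z t \<in> U' t \<Longrightarrow> lag_vec lagidx z (Suc n) \<in> V"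
proof -
  obtain \<epsilon> where "\<epsilon> > 0" "ball x0 \<epsilon> \<subseteq> V" using \<open>open V\<close> \<open>x0 \<in> V\<close> open_contains_ball by blast
  define \<epsilon>' where "\<epsilon>' = \<epsilon> / CARD('m \<times> 'l)"
  define U' where "U' t = U t \<inter> (\<Inter>l\<in>{l. t = Suc n - lagidx l}. ball (lag_block x0 l) \<epsilon>')" for t
  have lag_time_inj: "l = l'" if "Suc n - lagidx l = Suc n - lagidx l'" for l l'
  proof -
    have "lagidx l = lagidx l'" using that lagidx_bounds[of l] lagidx_bounds[of l'] \<open>M \<le> n\<close> by arith
    then show ?thesis using lagidx_inj by (simp add: inj_eq)
  qed
  have nonempty: "U' t \<noteq> {}" for t
  proof (cases "\<exists>l. t = Suc n - lagidx l")
    case True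
    then obtain l where "t = Suc n - lagidx l" by blast
    then have "U' t = U t \<inter> ball (lag_block x0 l) \<epsilon>'"
      unfolding U'_def using lag_time_inj by blast
    then show ?thesis
      using x0[of l] \<open>t = Suc n - lagidx l\<close> \<open>\<epsilon> > 0\<close> unfolding \<epsilon>'_def by force
  next
    case False
    then show ?thesis using U(2) unfolding U'_def by auto
  qed
  have "open (U' t)" for t unfolding U'_def by (intro open_Int open_INT U(1)) auto
  moreover have "U' t \<subseteq> U t" for t unfolding U'_def by blast
  moreover have "lag_vec lagidx z (Suc n) \<in> V" if z: "\<forall>t\<in>{1..n}. z t \<in> U' t" for z
  proof -
    have "Suc n - lagidx l \<in> {1..n}" for l using lagidx_bounds[of l] \<open>M \<le> n\<close> by auto
    then have "dist (lag_block (lag_vec lagidx z (Suc n)) l) (lag_block x0 l) < \<epsilon>'" for l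
      using z unfolding U'_def lag_block_lag_vec by (fastforce simp: dist_commute)
    then have "dist (lag_vec lagidx z (Suc n)) x0 < \<epsilon>"
      unfolding \<epsilon>'_def by (rule dist_lt_if_lag_blocks_close[of "lag_vec lagidx z (Suc n)" x0 \<epsilon>])
    then show ?thesis using \<open>ball x0 \<epsilon> \<subseteq> V\<close> by (auto simp: dist_commute)
  qed
  ultimately show ?thesis using that nonempty by blast
qed

text \<open>Once the transition parameters at the lag vector feeding step \<open>n + 1\<close> separate the regimes
  in use, the Gaussians in \<open>z\<^sub>n\<^sub>+\<^sub>1\<close> separate the paths by their regime at time \<open>n + 1\<close>.\<close>

lemma path_densities_last_step:
  fixes I :: "'k set"
  assumes "M \<le> n" "finite I" "open W" "W \<noteq> {}"
    and inj: "inj_on (\<lambda>\<beta>. (mf (lag_vec lagidx z (Suc n)) \<beta>, Sf (lag_vec lagidx z (Suc n)) \<beta>))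
      ((\<lambda>j. Bt j (Suc n)) ` I)"
    and zero: "\<And>y. y \<in> W \<Longrightarrow> (\<Sum>j\<in>I. d j * path_density (Suc n) (A j) (Bt j) (z(Suc n := y))) = 0"
    and "i \<in> I"
  shows "(\<Sum>j\<in>{j\<in>I. Bt j (Suc n) = Bt i (Suc n)}. d j * path_density n (A j) (Bt j) z) = 0"
proof -
  define x where "x = lag_vec lagidx z (Suc n)"
  define p where "p j = (mf x (Bt j (Suc n)), Sf x (Bt j (Suc n)))" for j
  define e where "e j = d j * path_density n (A j) (Bt j) z" for j
  have zero_W: "\<forall>y\<in>W. (\<Sum>j\<in>I. e j * gauss (fst (p j)) (snd (p j)) y) = 0"
  proof
    fix y assume "y \<in> W"
    from zero[OF this] show "(\<Sum>j\<in>I. e j * gauss (fst (p j)) (snd (p j)) y) = 0"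
      unfolding e_def p_def x_def by (simp add: path_density_Suc_fun_upd[OF \<open>M \<le> n\<close>] mult.assoc)
  qed
  obtain y0 where "y0 \<in> W" using \<open>W \<noteq> {}\<close> by blast
  moreover have "\<forall>j\<in>I. posdef (snd (p j))" by (simp add: p_def Sf_posdef)
  ultimately have "\<forall>i\<in>I. (\<Sum>j\<in>{j\<in>I. p j = p i}. e j) = 0"
    using gauss_linear_independent_grouped[OF \<open>finite I\<close> _ \<open>open W\<close> _ zero_W] by blast
  then have "(\<Sum>j\<in>{j\<in>I. p j = p i}. e j) = 0" using \<open>i \<in> I\<close> by blast
  moreover have "p j = p i \<longleftrightarrow> Bt j (Suc n) = Bt i (Suc n)" if "j \<in> I" for j
    using inj_on_eq_iff[OF inj, of "Bt j (Suc n)" "Bt i (Suc n)"] that \<open>i \<in> I\<close>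
    unfolding p_def x_def by auto
  then have "{j\<in>I. p j = p i} = {j\<in>I. Bt j (Suc n) = Bt i (Suc n)}" by auto
  ultimately show ?thesis unfolding e_def by simp
qed

text \<open>The sets \<open>U t\<close>, \<open>t \<le> n\<close>, are shrunk until the lag vector feeding step \<open>n + 1\<close> lies where
  the regimes in use have pairwise distinct transition parameters.\<close>

lemma path_densities_peel:
  fixes I :: "'k set"
  assumes "M \<le> n" "finite I" and U: "\<And>t. open (U t)" "\<And>t. U t \<noteq> {}"
    and zero: "\<And>z. \<forall>t\<in>{1..Suc n}. z t \<in> U t \<Longrightarrow>
      (\<Sum>j\<in>I. d j * path_density (Suc n) (A j) (Bt j) z) = 0"
    and "i \<in> I"
  shows "\<exists>U'. (\<forall>t. open (U' t) \<and> U' t \<noteq> {}) \<and> (\<forall>z. (\<forall>t\<in>{1..n}. z t \<in> U' t) \<longrightarrow>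
      (\<Sum>j\<in>{j\<in>I. Bt j (Suc n) = Bt i (Suc n)}. d j * path_density n (A j) (Bt j) z) = 0)"
proof -
  define L where "L = {x. \<forall>l. lag_block x l \<in> U (Suc n - lagidx l)}"
  have "open L" unfolding L_def using U(1) by (rule open_lag_box)
  moreover have "L \<noteq> {}"
    using lag_box_nonempty[of "\<lambda>l. U (Suc n - lagidx l)"] U(2) unfolding L_def by blast
  moreover have "finite ((\<lambda>j. Bt j (Suc n)) ` I)" using \<open>finite I\<close> by simp
  ultimately have "\<exists>V. open V \<and> V \<noteq> {} \<and> V \<subseteq> L \<and>
      (\<forall>x\<in>V. inj_on (\<lambda>\<beta>. (mf x \<beta>, Sf x \<beta>)) ((\<lambda>j. Bt j (Suc n)) ` I))"
    using analytic_params_inj_on_open_subset[OF trans_params_analytic trans_params_distinct] by simp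
  then obtain V where "open V" "V \<noteq> {}" "V \<subseteq> L"
    and V_inj: "\<forall>x\<in>V. inj_on (\<lambda>\<beta>. (mf x \<beta>, Sf x \<beta>)) ((\<lambda>j. Bt j (Suc n)) ` I)"
    by blast
  from \<open>V \<noteq> {}\<close> \<open>V \<subseteq> L\<close> obtain x0 where "x0 \<in> V" "x0 \<in> L" by blast
  then have x0: "\<And>l. lag_block x0 l \<in> U (Suc n - lagidx l)" unfolding L_def by blast
  obtain U' where U': "\<And>t. open (U' t)" "\<And>t. U' t \<noteq> {}" "\<And>t. U' t \<subseteq> U t"
    and lag_in_V: "\<And>z. \<forall>t\<in>{1..n}. z t \<in> U' t \<Longrightarrow> lag_vec lagidx z (Suc n) \<in> V"
    using lag_box_shrink[OF \<open>M \<le> n\<close> U \<open>open V\<close> \<open>x0 \<in> V\<close> x0] by blast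
  have "(\<Sum>j\<in>{j\<in>I. Bt j (Suc n) = Bt i (Suc n)}. d j * path_density n (A j) (Bt j) z) = 0"
    if z: "\<forall>t\<in>{1..n}. z t \<in> U' t" for z
  proof (rule path_densities_last_step[OF \<open>M \<le> n\<close> \<open>finite I\<close> U(1,2) _ _ \<open>i \<in> I\<close>])
    show "inj_on (\<lambda>\<beta>. (mf (lag_vec lagidx z (Suc n)) \<beta>, Sf (lag_vec lagidx z (Suc n)) \<beta>))
      ((\<lambda>j. Bt j (Suc n)) ` I)"
      using V_inj lag_in_V[OF z] by blast
    fix y assume "y \<in> U (Suc n)"
    then have "\<forall>t\<in>{1..Suc n}. (z(Suc n := y)) t \<in> U t"
      using z U'(3) by (auto simp: le_Suc_eq subset_iff)
    then show "(\<Sum>j\<in>I. d j * path_density (Suc n) (A j) (Bt j) (z(Suc n := y))) = 0"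
      by (rule zero)
  qed
  with U'(1,2) show ?thesis by blast
qed

lemma path_densities_grouped_independent:
  fixes I :: "'k set"
  assumes "M \<le> n" "finite I" "\<And>t. open (U t)" "\<And>t. U t \<noteq> {}"
    and "\<And>z. \<forall>t\<in>{1..n}. z t \<in> U t \<Longrightarrow> (\<Sum>j\<in>I. d j * path_density n (A j) (Bt j) z) = 0"
    and "i \<in> I"
  shows "(\<Sum>j\<in>{j\<in>I. A j = A i \<and> (\<forall>t\<in>{M+1..n}. Bt j t = Bt i t)}. d j) = 0"
  using assms
proof (induction n arbitrary: I U rule: nat_induct_at_least)
  case base
  have "(\<Sum>j\<in>{j\<in>I. A j = A i}. d j) = 0"
    by (rule init_densities_grouped_independent[OF base.prems(1-3) _ base.prems(5)])
      (use base.prems(4) in \<open>simp add: path_density_M\<close>)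
  then show ?case by simp
next
  case (Suc n)
  define I' where "I' = {j\<in>I. Bt j (Suc n) = Bt i (Suc n)}"
  obtain U' where U': "(\<forall>t. open (U' t) \<and> U' t \<noteq> {}) \<and> (\<forall>z. (\<forall>t\<in>{1..n}. z t \<in> U' t) \<longrightarrow>
      (\<Sum>j\<in>{j\<in>I. Bt j (Suc n) = Bt i (Suc n)}. d j * path_density n (A j) (Bt j) z) = 0)"
    using path_densities_peel[OF Suc.hyps(1) Suc.prems(1-5)] by (rule exE)
  then have zero': "\<forall>z. (\<forall>t\<in>{1..n}. z t \<in> U' t) \<longrightarrow> (\<Sum>j\<in>I'. d j * path_density n (A j) (Bt j) z) = 0"
    unfolding I'_def by (rule conjunct2)
  have "(\<Sum>j\<in>{j\<in>I'. A j = A i \<and> (\<forall>t\<in>{M+1..n}. Bt j t = Bt i t)}. d j) = 0"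
  proof (rule Suc.IH)
    show "finite I'" using Suc.prems(1) unfolding I'_def by simp
    show "open (U' t)" "U' t \<noteq> {}" for t using U' by auto
    show "(\<Sum>j\<in>I'. d j * path_density n (A j) (Bt j) z) = 0" if "\<forall>t\<in>{1..n}. z t \<in> U' t" for z
      using zero' that by blast
    show "i \<in> I'" using Suc.prems(5) unfolding I'_def by simp
  qed
  moreover have "{M+1..Suc n} = insert (Suc n) {M+1..n}" using Suc.hyps(1) by auto
  then have "{j\<in>I'. A j = A i \<and> (\<forall>t\<in>{M+1..n}. Bt j t = Bt i t)}
      = {j\<in>I. A j = A i \<and> (\<forall>t\<in>{M+1..Suc n}. Bt j t = Bt i t)}"
    unfolding I'_def by auto
  ultimately show ?case by simp
qed

lemma mixture_weights_eq:
  fixes I :: "'i set" and J :: "'j set"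
  assumes "M \<le> T" "finite I" "finite J"
    and eq: "\<And>z. (\<Sum>i\<in>I. c i * path_density T (a i) (b i) z) = (\<Sum>j\<in>J. c' j * path_density T (a' j) (b' j) z)"
  shows "(\<Sum>i\<in>{i\<in>I. regime_path M T a b i = x}. c i) = (\<Sum>j\<in>{j\<in>J. regime_path M T a' b' j = x}. c' j)"
proof -
  define d where "d = case_sum c (\<lambda>j. - c' j)"
  define A where "A = case_sum a a'"
  define Bt where "Bt = case_sum b b'"
  define key where "key = case_sum (regime_path M T a b) (regime_path M T a' b')"
  have same_path: "A \<kappa> = A \<iota> \<and> (\<forall>t\<in>{M+1..T}. Bt \<kappa> t = Bt \<iota> t) \<longleftrightarrow> key \<kappa> = key \<iota>" for \<kappa> \<iota>
    unfolding A_def Bt_def key_def by (cases \<kappa>; cases \<iota>) (simp_all add: regime_path_eq_iff)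
  have "(\<Sum>\<kappa>\<in>{\<kappa>\<in>I <+> J. key \<kappa> = x}. d \<kappa>) = 0"
  proof (cases "\<exists>\<iota>\<in>I <+> J. key \<iota> = x")
    case True
    then obtain \<iota> where "\<iota> \<in> I <+> J" "key \<iota> = x" by blast
    moreover have "(\<Sum>\<kappa>\<in>I <+> J. d \<kappa> * path_density T (A \<kappa>) (Bt \<kappa>) z) = 0" for z
      using eq[of z] \<open>finite I\<close> \<open>finite J\<close> by (simp add: d_def A_def Bt_def sum.Plus sum_negf)
    ultimately have "(\<Sum>\<kappa>\<in>{\<kappa>\<in>I <+> J. A \<kappa> = A \<iota> \<and> (\<forall>t\<in>{M+1..T}. Bt \<kappa> t = Bt \<iota> t)}. d \<kappa>) = 0"
      using path_densities_grouped_independent[OF \<open>M \<le> T\<close>, of "I <+> J" "\<lambda>_. UNIV" d A Bt \<iota>]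
        \<open>finite I\<close> \<open>finite J\<close> by simp
    then show ?thesis unfolding same_path \<open>key \<iota> = x\<close> .
  next
    case False
    then have "{\<kappa>\<in>I <+> J. key \<kappa> = x} = {}" by blast
    then show ?thesis by (simp only: sum.empty)
  qed
  moreover have "(\<Sum>\<kappa>\<in>{\<kappa>\<in>I <+> J. key \<kappa> = x}. d \<kappa>) =
      (\<Sum>i\<in>{i\<in>I. regime_path M T a b i = x}. c i) - (\<Sum>j\<in>{j\<in>J. regime_path M T a' b' j = x}. c' j)"
    using \<open>finite I\<close> \<open>finite J\<close>
    by (simp add: sum.inter_filter sum.Plus d_def key_def if_distrib sum_negf[symmetric] cong: if_cong)
  ultimately show ?thesis by simp
qed

end

text \<open>The \<open>C = K0 * K ^ (T - M)\<close> distinct regime paths exhaust the product of the regime sets.\<close>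

lemma msm_member_regime_paths:
  assumes "msm_member M T C K0 K c a b"
  obtains A0 B0 where "finite A0" "card A0 = K0" "finite B0" "card B0 = K"
    "inj_on (regime_path M T a b) {1..C}"
    "regime_path M T a b ` {1..C} = A0 \<times> Pi\<^sub>E {M+1..T} (\<lambda>_. B0)"
proof -
  obtain A0 B0 where mem: "C = K0 * K ^ (T - M)" "finite A0" "card A0 = K0" "finite B0" "card B0 = K"
    "\<forall>i\<in>{1..C}. a i \<in> A0 \<and> (\<forall>t\<in>{M+1..T}. b i t \<in> B0)"
    "\<forall>i\<in>{1..C}. \<forall>i'\<in>{1..C}. i \<noteq> i' \<longrightarrow> a i \<noteq> a i' \<or> (\<exists>t\<in>{M+1..T}. b i t \<noteq> b i' t)"
    using assms unfolding msm_member_def by blast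
  have inj: "inj_on (regime_path M T a b) {1..C}"
    using mem(7) unfolding inj_on_def regime_path_eq_iff by blast
  have "regime_path M T a b ` {1..C} \<subseteq> A0 \<times> Pi\<^sub>E {M+1..T} (\<lambda>_. B0)"
    using mem(6) by (auto simp: regime_path_def)
  moreover have "card (A0 \<times> Pi\<^sub>E {M+1..T} (\<lambda>_. B0)) = K0 * K ^ (T - M)"
    using mem(3,5) by (simp add: card_cartesian_product card_PiE)
  then have "card (A0 \<times> Pi\<^sub>E {M+1..T} (\<lambda>_. B0)) = card (regime_path M T a b ` {1..C})"
    using mem(1) card_image[OF inj] by simp
  ultimately have "regime_path M T a b ` {1..C} = A0 \<times> Pi\<^sub>E {M+1..T} (\<lambda>_. B0)"
    using card_subset_eq mem(2,4) by (metis finite_PiE finite_SigmaI finite_atLeastAtMost)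
  with mem(2-5) inj show ?thesis using that by blast
qed

lemma msm_member_sizes_eq:
  assumes mem: "msm_member M T C K0 K c a b" and mem': "msm_member M T C' K0' K' c' a' b'"
    and "M < T" and paths: "regime_path M T a b ` {1..C} = regime_path M T a' b' ` {1..C'}"
  shows "C = C' \<and> K0 = K0' \<and> K = K'"
proof -
  obtain A0 B0 where A0: "finite A0" "card A0 = K0" "finite B0" "card B0 = K"
    and inj: "inj_on (regime_path M T a b) {1..C}"
    and img: "regime_path M T a b ` {1..C} = A0 \<times> Pi\<^sub>E {M+1..T} (\<lambda>_. B0)"
    using msm_member_regime_paths[OF mem] by blast
  obtain A0' B0' where A0': "finite A0'" "card A0' = K0'" "finite B0'" "card B0' = K'"
    and inj': "inj_on (regime_path M T a' b') {1..C'}"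
    and img': "regime_path M T a' b' ` {1..C'} = A0' \<times> Pi\<^sub>E {M+1..T} (\<lambda>_. B0')"
    using msm_member_regime_paths[OF mem'] by blast
  have "C = C'" using card_image[OF inj] card_image[OF inj'] paths by simp
  have "(\<Sum>i\<in>{1..C}. c i) = 1" using mem unfolding msm_member_def by blast
  then have "C \<noteq> 0" by (cases "C = 0") auto
  then have "A0 \<times> Pi\<^sub>E {M+1..T} (\<lambda>_. B0) \<noteq> {}" using img by auto
  then have "A0 = A0'" and "Pi\<^sub>E {M+1..T} (\<lambda>_. B0) = Pi\<^sub>E {M+1..T} (\<lambda>_. B0')"
    using img img' paths by (auto simp: times_eq_iff)
  moreover from this(2) have "B0 = B0'"
    using \<open>A0 \<times> Pi\<^sub>E {M+1..T} (\<lambda>_. B0) \<noteq> {}\<close> \<open>M < T\<close> by (auto simp: PiE_eq_iff)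
  ultimately show ?thesis using \<open>C = C'\<close> A0 A0' by simp
qed

lemma positive_weight_matched:
  fixes c :: "'i \<Rightarrow> real" and c' :: "'j \<Rightarrow> real"
  assumes "inj_on key I" "inj_on key' J" "i \<in> I" "c i > 0"
    and "(\<Sum>i'\<in>{i'\<in>I. key i' = key i}. c i') = (\<Sum>j\<in>{j\<in>J. key' j = key i}. c' j)"
  shows "\<exists>j\<in>J. key' j = key i \<and> c' j = c i"
proof -
  have "{i'\<in>I. key i' = key i} = {i}" using assms(1,3) by (auto dest: inj_onD)
  then have "(\<Sum>j\<in>{j\<in>J. key' j = key i}. c' j) = c i" using assms(5) by simp
  moreover have "{j\<in>J. key' j = key i} \<noteq> {}"
  proof
    assume empty: "{j\<in>J. key' j = key i} = {}"
    have "c i = 0" using calculation unfolding empty by simp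
    then show False using \<open>c i > 0\<close> by simp
  qed
  ultimately obtain j where "j \<in> J" "key' j = key i"
    and sum_eq: "(\<Sum>j\<in>{j\<in>J. key' j = key i}. c' j) = c i" by blast
  moreover have "{j'\<in>J. key' j' = key i} = {j}"
    using assms(2) \<open>j \<in> J\<close> unfolding \<open>key' j = key i\<close>[symmetric] by (auto dest: inj_onD)
  ultimately show ?thesis using sum_eq by auto
qed

lemma msm_members_same_path_weights:
  assumes mem: "msm_member M T C K0 K c a b" and mem': "msm_member M T C' K0' K' c' a' b'"
    and "M < T"
    and weights: "\<And>x. (\<Sum>i\<in>{i\<in>{1..C}. regime_path M T a b i = x}. c i)
      = (\<Sum>j\<in>{j\<in>{1..C'}. regime_path M T a' b' j = x}. c' j)"
  shows "C = C' \<and> K0 = K0' \<and> K = K' \<and>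
    (\<forall>i\<in>{1..C}. \<exists>j\<in>{1..C'}. c' j = c i \<and> a' j = a i \<and> (\<forall>t\<in>{M+1..T}. b' j t = b i t))"
proof -
  define key key' where "key = regime_path M T a b" and "key' = regime_path M T a' b'"
  have inj: "inj_on key {1..C}" and inj': "inj_on key' {1..C'}"
    unfolding key_def key'_def using msm_member_regime_paths[OF mem] msm_member_regime_paths[OF mem'] by metis+
  have pos: "\<forall>i\<in>{1..C}. c i > 0" "\<forall>j\<in>{1..C'}. c' j > 0"
    using mem mem' unfolding msm_member_def by auto
  have match: "\<exists>j\<in>{1..C'}. key' j = key i \<and> c' j = c i" if "i \<in> {1..C}" for i
    using positive_weight_matched[OF inj inj' that] pos weights that unfolding key_def key'_def by auto
  have match': "\<exists>i\<in>{1..C}. key i = key' j \<and> c i = c' j" if "j \<in> {1..C'}" for j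
    using positive_weight_matched[OF inj' inj that] pos weights[symmetric] that
    unfolding key_def key'_def by auto
  have "key ` {1..C} = key' ` {1..C'}"
  proof
    show "key ` {1..C} \<subseteq> key' ` {1..C'}" using match by (force simp: image_iff)
    show "key' ` {1..C'} \<subseteq> key ` {1..C}" using match' by (force simp: image_iff)
  qed
  then have "C = C' \<and> K0 = K0' \<and> K = K'"
    using msm_member_sizes_eq[OF mem mem' \<open>M < T\<close>] unfolding key_def key'_def by blast
  moreover have "\<exists>j\<in>{1..C'}. c' j = c i \<and> a' j = a i \<and> (\<forall>t\<in>{M+1..T}. b' j t = b i t)"
    if "i \<in> {1..C}" for i
    using match[OF that] unfolding key_def key'_def regime_path_eq_iff by auto
  ultimately show ?thesis by blast
qed

theorem theorem1:
  fixes mu :: "'a \<Rightarrow> real^('m::finite \<times> 'l::finite)"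
    and S1 :: "'a \<Rightarrow> real^('m \<times> 'l)^('m \<times> 'l)"
    and mf :: "real^('m \<times> 'l) \<Rightarrow> 'b \<Rightarrow> real^'m"
    and Sf :: "real^('m \<times> 'l) \<Rightarrow> 'b \<Rightarrow> real^'m^'m"
    and lagidx :: "'l \<Rightarrow> nat"
    and M T :: nat
    and C K0 K :: nat and c :: "nat \<Rightarrow> real" and a :: "nat \<Rightarrow> 'a" and b :: "nat \<Rightarrow> nat \<Rightarrow> 'b"
    and C' K0' K' :: nat and c' :: "nat \<Rightarrow> real" and a' :: "nat \<Rightarrow> 'a" and b' :: "nat \<Rightarrow> nat \<Rightarrow> 'b"
  assumes lag: "bij_betw lagidx UNIV {1..M}"
    and MT: "0 < M" "M < T"
    and S1_pd: "\<forall>\<alpha>. posdef (S1 \<alpha>)"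
    and Sf_pd: "\<forall>x \<beta>. posdef (Sf x \<beta>)"
    and m1_trans: "\<forall>\<beta> \<beta>'. \<beta> \<noteq> \<beta>' \<longrightarrow>
        (\<exists>Z. Z \<in> sets lebesgue \<and> emeasure lebesgue Z \<noteq> 0 \<and>
             (\<forall>x\<in>Z. mf x \<beta> \<noteq> mf x \<beta>' \<or> Sf x \<beta> \<noteq> Sf x \<beta>'))"
    and m1_init: "\<forall>\<alpha> \<alpha>'. \<alpha> \<noteq> \<alpha>' \<longleftrightarrow> (mu \<alpha> \<noteq> mu \<alpha>' \<or> S1 \<alpha> \<noteq> S1 \<alpha>')"
    and m2: "\<forall>\<beta>. analytic_vec (\<lambda>x. mf x \<beta>) \<and> analytic_mat (\<lambda>x. Sf x \<beta>)"
    and mem: "msm_member M T C K0 K c a b"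
    and mem': "msm_member M T C' K0' K' c' a' b'"
    and eq: "\<forall>z. msm_density mu S1 mf Sf lagidx M T C c a b z
              = msm_density mu S1 mf Sf lagidx M T C' c' a' b' z"
  shows "C = C' \<and> K0 = K0' \<and> K = K' \<and>
    (\<forall>i\<in>{1..C}. \<exists>j\<in>{1..C'}.
       c i = c' j \<and>
       (\<forall>t1\<in>{M+1..T}. \<forall>t2\<in>{M+1..T}. t1 \<noteq> t2 \<longrightarrow> b i t1 = b i t2 \<longrightarrow> b' j t1 = b' j t2) \<and>
       (\<forall>x. gauss (mu (a i)) (S1 (a i)) x = gauss (mu (a' j)) (S1 (a' j)) x) \<and>
       (\<forall>t\<in>{M+1..T}. \<forall>x y. gauss (mf x (b i t)) (Sf x (b i t)) y
                             = gauss (mf x (b' j t)) (Sf x (b' j t)) y))"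
proof -
  interpret msm_model mu S1 mf Sf lagidx M
  proof
    show "inj (\<lambda>\<alpha>. (mu \<alpha>, S1 \<alpha>))"
    proof (rule injI)
      fix \<alpha> \<alpha>' assume "(mu \<alpha>, S1 \<alpha>) = (mu \<alpha>', S1 \<alpha>')"
      then show "\<alpha> = \<alpha>'" using m1_init by blast
    qed
    show "\<exists>x. (mf x \<beta>, Sf x \<beta>) \<noteq> (mf x \<beta>', Sf x \<beta>')" if "\<beta> \<noteq> \<beta>'" for \<beta> \<beta>'
    proof -
      obtain Z where "emeasure lebesgue Z \<noteq> 0" "\<forall>x\<in>Z. mf x \<beta> \<noteq> mf x \<beta>' \<or> Sf x \<beta> \<noteq> Sf x \<beta>'"
        using m1_trans \<open>\<beta> \<noteq> \<beta>'\<close> by blast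
      moreover from this(1) have "Z \<noteq> {}" by auto
      ultimately show ?thesis by auto
    qed
  qed (use lag S1_pd Sf_pd m2 in auto)
  have "(\<Sum>i\<in>{i\<in>{1..C}. regime_path M T a b i = x}. c i)
      = (\<Sum>j\<in>{j\<in>{1..C'}. regime_path M T a' b' j = x}. c' j)" for x
    using eq MT by (intro mixture_weights_eq) (simp_all add: msm_density_eq_sum_path_density)
  note same = msm_members_same_path_weights[OF mem mem' MT(2) this]
  show ?thesis
  proof (intro conjI ballI)
    show "C = C'" "K0 = K0'" "K = K'" using same by simp_all
    fix i assume "i \<in> {1..C}"
    then obtain j where "j \<in> {1..C'}" "c' j = c i" "a' j = a i" "\<forall>t\<in>{M+1..T}. b' j t = b i t"
      using same by blast
    then show "\<exists>j\<in>{1..C'}. c i = c' j \<and>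
       (\<forall>t1\<in>{M+1..T}. \<forall>t2\<in>{M+1..T}. t1 \<noteq> t2 \<longrightarrow> b i t1 = b i t2 \<longrightarrow> b' j t1 = b' j t2) \<and>
       (\<forall>x. gauss (mu (a i)) (S1 (a i)) x = gauss (mu (a' j)) (S1 (a' j)) x) \<and>
       (\<forall>t\<in>{M+1..T}. \<forall>x y. gauss (mf x (b i t)) (Sf x (b i t)) y
                             = gauss (mf x (b' j t)) (Sf x (b' j t)) y)"
      by (intro bexI[of _ j]) auto
  qed
qed

end
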